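(* Let $G$ be a connected graph with $\mathrm{col}(G)\geq 3$. Then for every integer $m\geq \mathrm{col}(G)+3$, $$P_{DP}(K_1\vee G,m)\geq \min\left\{P(K_1\vee G,m),\; m\,P_{DP}(G,m-1)+2\,(m-\mathrm{col}(G)-2)^{|V(G)|-2}\right\}.$$
   Context: All graphs are finite and simple. $K_1\vee G$ is the join of a single vertex with $G$. The coloring number $\mathrm{col}(G)$ is the smallest integer $d$ such that there is an ordering $v_1,\dots,v_n$ of $V(G)$ in which each $v_i$ has at most $d-1$ neighbors among $v_1,\dots,v_{i-1}$. $P(G,m)$ denotes the chromatic polynomial of $G$. A cover of a graph $G$ is a pair $\mathcal{H}=(L,H)$ where $H$ is a graph and $L:V(G)\to\mathcal{P}(V(H))$ satisfies: (1) the sets $L(u)$, $u\in V(G)$, partition $V(H)$; (2) for every $u$, $H[L(u)]$ is complete; (3) if $E_H(L(u),L(v))\neq\emptyset$ then $u=v$ or $uv\in E(G)$; (4) if $uv\in E(G)$ then $E_H(L(u),L(v))$ is a matching (possibly empty). Here $E_H(S,U)$ is the set of edges of $H$ between $S$ and $U$. The cover is $m$-fold if $|L(u)|=m$ for all $u$. An $\mathcal{H}$-coloring is an independent set of $H$ of size $|V(G)|$. $P_{DP}(G,\mathcal{H})$ is the number of $\mathcal{H}$-colorings, and $P_{DP}(G,m)$ is the minimum of $P_{DP}(G,\mathcal{H})$ over all $m$-fold covers $\mathcal{H}$ of $G$. *)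

theory Defs
  imports Main "HOL-Library.FuncSet"
begin

definition simple_graph :: "'a set \<Rightarrow> ('a \<Rightarrow> 'a \<Rightarrow> bool) \<Rightarrow> bool" where
  "simple_graph V E \<longleftrightarrow> finite V \<and> (\<forall>x y. E x y \<longrightarrow> x \<in> V \<and> y \<in> V)
     \<and> (\<forall>x y. E x y \<longrightarrow> E y x) \<and> (\<forall>x. \<not> E x x)"

definition connected_graph :: "'a set \<Rightarrow> ('a \<Rightarrow> 'a \<Rightarrow> bool) \<Rightarrow> bool" where
  "connected_graph V E \<longleftrightarrow> V \<noteq> {} \<and> (\<forall>u\<in>V. \<forall>v\<in>V. E\<^sup>*\<^sup>* u v)"

text \<open>Join K_1 \<or> G: new vertex None adjacent to every Some v, v in V.\<close>
definition join_V :: "'a set \<Rightarrow> 'a option set" where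
  "join_V V = insert None (Some ` V)"

definition join_E :: "'a set \<Rightarrow> ('a \<Rightarrow> 'a \<Rightarrow> bool) \<Rightarrow> 'a option \<Rightarrow> 'a option \<Rightarrow> bool" where
  "join_E V E x y \<longleftrightarrow>
     (case (x, y) of
        (None, None) \<Rightarrow> False
      | (None, Some v) \<Rightarrow> v \<in> V
      | (Some u, None) \<Rightarrow> u \<in> V
      | (Some u, Some v) \<Rightarrow> E u v)"

definition col :: "'a set \<Rightarrow> ('a \<Rightarrow> 'a \<Rightarrow> bool) \<Rightarrow> nat" where
  "col V E = (LEAST d. \<exists>xs. distinct xs \<and> set xs = V \<and>
      (\<forall>i < length xs. card {j. j < i \<and> E (xs ! i) (xs ! j)} < d))"

definition chrom_poly :: "'a set \<Rightarrow> ('a \<Rightarrow> 'a \<Rightarrow> bool) \<Rightarrow> nat \<Rightarrow> nat" where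
  "chrom_poly V E m = card {f \<in> V \<rightarrow>\<^sub>E {..<m}. \<forall>u\<in>V. \<forall>v\<in>V. E u v \<longrightarrow> f u \<noteq> f v}"

text \<open>Cover (L, H) of G, with H = (VH, EH). The vertices of H are taken in 'a \<times> nat;
  every cover of a finite graph is isomorphic to one of this form.\<close>
definition is_cover ::
  "'a set \<Rightarrow> ('a \<Rightarrow> 'a \<Rightarrow> bool) \<Rightarrow> ('a \<Rightarrow> ('a \<times> nat) set)
    \<Rightarrow> ('a \<times> nat) set \<Rightarrow> ('a \<times> nat \<Rightarrow> 'a \<times> nat \<Rightarrow> bool) \<Rightarrow> bool" where
  "is_cover V E L VH EH \<longleftrightarrow>
     simple_graph VH EH
     \<and> (\<forall>u\<in>V. L u \<subseteq> VH) \<and> (\<Union>u\<in>V. L u) = VH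
     \<and> (\<forall>u\<in>V. \<forall>v\<in>V. u \<noteq> v \<longrightarrow> L u \<inter> L v = {})
     \<and> (\<forall>u\<in>V. \<forall>x\<in>L u. \<forall>y\<in>L u. x \<noteq> y \<longrightarrow> EH x y)
     \<and> (\<forall>u\<in>V. \<forall>v\<in>V. \<forall>x\<in>L u. \<forall>y\<in>L v. EH x y \<longrightarrow> u = v \<or> E u v)
     \<and> (\<forall>u\<in>V. \<forall>v\<in>V. E u v \<longrightarrow>
          (\<forall>x\<in>L u. \<forall>y\<in>L v. \<forall>y'\<in>L v. EH x y \<and> EH x y' \<longrightarrow> y = y'))"

definition is_m_fold_cover ::
  "'a set \<Rightarrow> ('a \<Rightarrow> 'a \<Rightarrow> bool) \<Rightarrow> nat \<Rightarrow> ('a \<Rightarrow> ('a \<times> nat) set)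
    \<Rightarrow> ('a \<times> nat) set \<Rightarrow> ('a \<times> nat \<Rightarrow> 'a \<times> nat \<Rightarrow> bool) \<Rightarrow> bool" where
  "is_m_fold_cover V E m L VH EH \<longleftrightarrow> is_cover V E L VH EH \<and> (\<forall>u\<in>V. card (L u) = m)"

definition num_cover_colorings ::
  "'a set \<Rightarrow> ('a \<times> nat) set \<Rightarrow> ('a \<times> nat \<Rightarrow> 'a \<times> nat \<Rightarrow> bool) \<Rightarrow> nat" where
  "num_cover_colorings V VH EH =
     card {I. I \<subseteq> VH \<and> (\<forall>x\<in>I. \<forall>y\<in>I. \<not> EH x y) \<and> card I = card V}"

definition DP_poly :: "'a set \<Rightarrow> ('a \<Rightarrow> 'a \<Rightarrow> bool) \<Rightarrow> nat \<Rightarrow> nat" where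
  "DP_poly V E m = Inf {num_cover_colorings V VH EH | L VH EH. is_m_fold_cover V E m L VH EH}"

end

theory Submission
  imports Defs
begin

text \<open>
  An H-colouring of K_1 \<or> G chooses a colour x in the list of the apex; the other chosen colours
  form a colouring of G from the residual lists, the lists minus the neighbour of x, which keep at
  least m - 1 colours. Summing over the m choices of x gives m P_DP(G, m - 1), and the work is to find
  an excess of 2 (m - d - 3)^(n-2), where d = col(G) - 1 and n = |V(G)|, unless the cover is as good
  as the one counting proper colourings.

  If some apex colour x has no neighbour in the list of a vertex v, that list stays whole, and the
  colourings for x split into those avoiding one colour c at v and those using it; a greedy count
  along a degeneracy order bounds the latter by (m - d - 2)^(n-1). Otherwise every apex colour x is
  matched to a colour of each list. If these matched colours are never adjacent for distinct apex
  colours, H is the cover of ordinary colourings. If they are, for an edge uv and apex colours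
  x \<noteq> y, then for x (and likewise for y) one finds colours a at u and b at v without neighbours in
  each other's residual list; joining a and b gives a cover with P_DP(G, m - 1) colourings, and the
  colourings using both a and b add (m - d - 3)^(n-2) more.
\<close>

lemma sum_eq_card_iff_all_one:
  fixes f :: "'v \<Rightarrow> nat"
  assumes "finite V" "\<And>v. v \<in> V \<Longrightarrow> f v \<le> 1"
  shows "sum f V = card V \<longleftrightarrow> (\<forall>v\<in>V. f v = 1)"
proof
  assume sum: "sum f V = card V"
  show "\<forall>v\<in>V. f v = 1"
  proof (rule ccontr)
    assume "\<not> ?thesis"
    then obtain v where v: "v \<in> V" "f v = 0" using assms(2) by force
    have "sum f V = sum f (V - {v})" using v assms(1) by (simp add: sum.remove)
    also have "\<dots> \<le> card (V - {v})" using sum_mono[of "V - {v}" f "\<lambda>_. 1"] assms(2) by simp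
    also have "\<dots> < card V" using assms(1) v(1) by (rule card_Diff1_less)
    finally show False using sum by simp
  qed
qed simp

lemma choose_sublists:
  assumes "\<And>v. v \<in> V \<Longrightarrow> k \<le> card (A v)"
  obtains B where "\<And>v. v \<in> V \<Longrightarrow> B v \<subseteq> A v" "\<And>v. v \<in> V \<Longrightarrow> card (B v) = k"
proof -
  have "\<forall>v\<in>V. \<exists>S. S \<subseteq> A v \<and> card S = k"
    using assms obtain_subset_with_card_n by metis
  then obtain B where "\<forall>v\<in>V. B v \<subseteq> A v \<and> card (B v) = k" by metis
  then show ?thesis using that by blast
qed

lemma card_add_le_of_disjoint_subsets:
  assumes "finite C" "A \<subseteq> C" "B \<subseteq> C" "A \<inter> B = {}"
  shows "card A + card B \<le> card C"
proof -
  have "card A + card B = card (A \<union> B)"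
    using assms by (intro card_Un_disjoint[symmetric]) (auto intro: finite_subset)
  also have "\<dots> \<le> card C" using assms by (intro card_mono) auto
  finally show ?thesis .
qed

lemma card_le_of_unique_neighbours:
  assumes "finite B" and ex: "\<And>a. a \<in> A \<Longrightarrow> \<exists>b\<in>B. R a b"
    and uniq: "\<And>a a' b. a \<in> A \<Longrightarrow> a' \<in> A \<Longrightarrow> b \<in> B \<Longrightarrow> R a b \<Longrightarrow> R a' b \<Longrightarrow> a = a'"
  shows "card A \<le> card B"
proof -
  define f where "f a = (SOME b. b \<in> B \<and> R a b)" for a
  have f: "f a \<in> B \<and> R a (f a)" if "a \<in> A" for a
    using someI_ex[OF ex[OF that, unfolded Bex_def]] unfolding f_def .
  have "inj_on f A" by (rule inj_onI) (use f uniq in metis)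
  moreover have "f ` A \<subseteq> B" using f by blast
  ultimately show ?thesis using card_inj_on_le[OF _ _ \<open>finite B\<close>] by blast
qed

lemma sum_ge_card_mult_plus_excess:
  fixes g :: "'b \<Rightarrow> nat"
  assumes "finite S" "X \<subseteq> S" "\<And>x. x \<in> S \<Longrightarrow> D \<le> g x"
  shows "card S * D + (\<Sum>x\<in>X. g x - D) \<le> (\<Sum>x\<in>S. g x)"
proof -
  have "(\<Sum>x\<in>S. g x) = (\<Sum>x\<in>S. D + (g x - D))" using assms(3) by (intro sum.cong) auto
  also have "\<dots> = card S * D + (\<Sum>x\<in>S. g x - D)" by (simp add: sum.distrib)
  finally show ?thesis using sum_mono2[OF assms(1,2), of "\<lambda>x. g x - D"] by simp
qed

lemma two_mult_power_le_Suc_power: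
  fixes t :: nat
  assumes "1 \<le> t"
  shows "2 * t ^ k \<le> (t + 1) ^ Suc k"
proof -
  have "t ^ k \<le> (t + 1) ^ k" by (rule power_mono) simp_all
  then have "2 * t ^ k \<le> (t + 1) * (t + 1) ^ k" using assms by (intro mult_mono) simp_all
  then show ?thesis by simp
qed

section \<open>Covers with vertices of arbitrary type\<close>

lemma simple_graphD:
  assumes "simple_graph V E"
  shows simple_graph_finite: "finite V"
    and simple_graph_edge_in: "\<And>x y. E x y \<Longrightarrow> x \<in> V \<and> y \<in> V"
    and simple_graph_sym: "\<And>x y. E x y \<Longrightarrow> E y x"
    and simple_graph_irrefl: "\<And>x. \<not> E x x"
  using assms unfolding simple_graph_def by auto

definition dp_cover ::
  "'v set \<Rightarrow> ('v \<Rightarrow> 'v \<Rightarrow> bool) \<Rightarrow> ('v \<Rightarrow> 'b set) \<Rightarrow> 'b set \<Rightarrow> ('b \<Rightarrow> 'b \<Rightarrow> bool) \<Rightarrow> bool" where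
  "dp_cover V E L VH EH \<longleftrightarrow>
     simple_graph VH EH
     \<and> (\<forall>u\<in>V. L u \<subseteq> VH) \<and> (\<Union>u\<in>V. L u) = VH
     \<and> (\<forall>u\<in>V. \<forall>v\<in>V. u \<noteq> v \<longrightarrow> L u \<inter> L v = {})
     \<and> (\<forall>u\<in>V. \<forall>x\<in>L u. \<forall>y\<in>L u. x \<noteq> y \<longrightarrow> EH x y)
     \<and> (\<forall>u\<in>V. \<forall>v\<in>V. \<forall>x\<in>L u. \<forall>y\<in>L v. EH x y \<longrightarrow> u = v \<or> E u v)
     \<and> (\<forall>u\<in>V. \<forall>v\<in>V. E u v \<longrightarrow>
          (\<forall>x\<in>L u. \<forall>y\<in>L v. \<forall>y'\<in>L v. EH x y \<and> EH x y' \<longrightarrow> y = y'))"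

lemma is_cover_iff_dp_cover: "is_cover V E L VH EH \<longleftrightarrow> dp_cover V E L VH EH"
  unfolding is_cover_def dp_cover_def ..

lemma dp_coverD:
  assumes "dp_cover V E L VH EH"
  shows dp_cover_graph: "simple_graph VH EH"
    and dp_cover_lists: "(\<Union>u\<in>V. L u) = VH"
    and dp_cover_disjoint: "\<And>u v. u \<in> V \<Longrightarrow> v \<in> V \<Longrightarrow> u \<noteq> v \<Longrightarrow> L u \<inter> L v = {}"
    and dp_cover_clique: "\<And>u x y. u \<in> V \<Longrightarrow> x \<in> L u \<Longrightarrow> y \<in> L u \<Longrightarrow> x \<noteq> y \<Longrightarrow> EH x y"
    and dp_cover_cross: "\<And>u v x y. u \<in> V \<Longrightarrow> v \<in> V \<Longrightarrow> x \<in> L u \<Longrightarrow> y \<in> L v \<Longrightarrow> EH x y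
                           \<Longrightarrow> u = v \<or> E u v"
    and dp_cover_matching: "\<And>u v x y y'. u \<in> V \<Longrightarrow> v \<in> V \<Longrightarrow> E u v \<Longrightarrow> x \<in> L u
                           \<Longrightarrow> y \<in> L v \<Longrightarrow> y' \<in> L v \<Longrightarrow> EH x y \<Longrightarrow> EH x y' \<Longrightarrow> y = y'"
  using assms unfolding dp_cover_def by blast+

lemma dp_cover_finite_list:
  assumes "dp_cover V E L VH EH" "v \<in> V"
  shows "finite (L v)"
proof (rule finite_subset)
  show "L v \<subseteq> VH" using dp_cover_lists[OF assms(1)] assms(2) by blast
  show "finite VH" using simple_graph_finite[OF dp_cover_graph[OF assms(1)]] .
qed

lemma dp_cover_owner:
  assumes "dp_cover V E L VH EH" "u \<in> V" "v \<in> V" "x \<in> L u" "x \<in> L v"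
  shows "u = v"
  using dp_cover_disjoint[OF assms(1,2,3)] assms(4,5) by blast

lemma dp_cover_unique_neighbour:
  assumes "dp_cover V E L VH EH" "u \<in> V" "v \<in> V" "u \<noteq> v" "x \<in> L u" "y \<in> L v" "y' \<in> L v"
    "EH x y" "EH x y'"
  shows "y = y'"
proof -
  have "E u v" using dp_cover_cross[OF assms(1,2,3,5,6,8)] assms(4) by blast
  then show ?thesis using dp_cover_matching[OF assms(1,2,3) _ assms(5,6,7,8,9)] by blast
qed

lemma dp_cover_card_neighbours_le_1:
  assumes "dp_cover V E L VH EH" "u \<in> V" "v \<in> V" "u \<noteq> v" "x \<in> L u"
  shows "card {y \<in> L v. EH x y} \<le> 1"
proof -
  have "\<forall>y\<in>{y \<in> L v. EH x y}. \<forall>y'\<in>{y \<in> L v. EH x y}. y = y'"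
    using dp_cover_unique_neighbour[OF assms] by blast
  then show ?thesis
    using card_le_Suc0_iff_eq[of "{y \<in> L v. EH x y}"] dp_cover_finite_list[OF assms(1,3)] by simp
qed

definition indep_transversals :: "'v set \<Rightarrow> ('v \<Rightarrow> 'b set) \<Rightarrow> ('b \<Rightarrow> 'b \<Rightarrow> bool) \<Rightarrow> 'b set set" where
  "indep_transversals V A EH =
     {I. I \<subseteq> (\<Union>v\<in>V. A v) \<and> (\<forall>x\<in>I. \<forall>y\<in>I. \<not> EH x y) \<and> (\<forall>v\<in>V. card (I \<inter> A v) = 1)}"

lemma finite_indep_transversals:
  "finite V \<Longrightarrow> (\<And>v. v \<in> V \<Longrightarrow> finite (A v)) \<Longrightarrow> finite (indep_transversals V A EH)"
  unfolding indep_transversals_def by (rule finite_subset[of _ "Pow (\<Union>v\<in>V. A v)"]) auto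

lemma indep_transversals_mono:
  assumes sub: "\<And>v. v \<in> V \<Longrightarrow> B v \<subseteq> A v"
    and disj: "\<And>u v. u \<in> V \<Longrightarrow> v \<in> V \<Longrightarrow> u \<noteq> v \<Longrightarrow> A u \<inter> A v = {}"
    and edges: "\<And>p q. p \<in> (\<Union>v\<in>V. B v) \<Longrightarrow> q \<in> (\<Union>v\<in>V. B v) \<Longrightarrow> EH p q \<Longrightarrow> EH' p q"
  shows "indep_transversals V B EH' \<subseteq> indep_transversals V A EH"
proof
  fix I assume "I \<in> indep_transversals V B EH'"
  then have I: "I \<subseteq> (\<Union>v\<in>V. B v)" "\<forall>x\<in>I. \<forall>y\<in>I. \<not> EH' x y" "\<forall>v\<in>V. card (I \<inter> B v) = 1"
    unfolding indep_transversals_def by auto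
  have "I \<inter> A v = I \<inter> B v" if "v \<in> V" for v
    using I(1) sub disj that by blast
  moreover have "I \<subseteq> (\<Union>v\<in>V. A v)" using I(1) sub by blast
  moreover have "\<not> EH x y" if "x \<in> I" "y \<in> I" for x y
    using I(1,2) edges[of x y] that by blast
  ultimately show "I \<in> indep_transversals V A EH"
    using I(3) unfolding indep_transversals_def by simp
qed

lemma indep_transversal_singleton_mem:
  "I \<in> indep_transversals V A EH \<Longrightarrow> v \<in> V \<Longrightarrow> A v = {c} \<Longrightarrow> c \<in> I"
  unfolding indep_transversals_def by (cases "c \<in> I") auto

text \<open>Lists are cliques, so an independent set meets each of them at most once.\<close>
lemma dp_cover_indep_set_card_iff:
  assumes cov: "dp_cover V E L VH EH" and "finite V"
    and I: "I \<subseteq> VH" "\<forall>x\<in>I. \<forall>y\<in>I. \<not> EH x y"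
  shows "card I = card V \<longleftrightarrow> (\<forall>v\<in>V. card (I \<inter> L v) = 1)"
proof -
  have fin: "finite (L v)" if "v \<in> V" for v using dp_cover_finite_list[OF cov that] .
  have le1: "card (I \<inter> L v) \<le> 1" if v: "v \<in> V" for v
  proof -
    have "\<forall>x\<in>I \<inter> L v. \<forall>y\<in>I \<inter> L v. x = y"
      using dp_cover_clique[OF cov v] I(2) by blast
    then show ?thesis using card_le_Suc0_iff_eq[of "I \<inter> L v"] fin[OF v] by simp
  qed
  have "I = (\<Union>v\<in>V. I \<inter> L v)" using I(1) dp_cover_lists[OF cov] by blast
  also have "card \<dots> = (\<Sum>v\<in>V. card (I \<inter> L v))"
    by (rule card_UN_disjoint[OF \<open>finite V\<close>]) (use fin dp_cover_disjoint[OF cov] in blast)+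
  finally show ?thesis using sum_eq_card_iff_all_one[OF \<open>finite V\<close> le1] by simp
qed

lemma dp_cover_indep_sets_eq_indep_transversals:
  assumes cov: "dp_cover V E L VH EH" and "finite V"
  shows "{I. I \<subseteq> VH \<and> (\<forall>x\<in>I. \<forall>y\<in>I. \<not> EH x y) \<and> card I = card V}
           = indep_transversals V L EH"
proof -
  have "I \<in> indep_transversals V L EH \<longleftrightarrow>
          I \<subseteq> VH \<and> (\<forall>x\<in>I. \<forall>y\<in>I. \<not> EH x y) \<and> card I = card V" for I
  proof (cases "I \<subseteq> VH \<and> (\<forall>x\<in>I. \<forall>y\<in>I. \<not> EH x y)")
    case True
    then show ?thesis using dp_cover_indep_set_card_iff[OF assms, of I]
      unfolding indep_transversals_def dp_cover_lists[OF cov] by simp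
  next
    case False
    then show ?thesis unfolding indep_transversals_def dp_cover_lists[OF cov] by blast
  qed
  then show ?thesis by blast
qed

lemma num_cover_colorings_eq_card_indep_transversals:
  "dp_cover V E L VH EH \<Longrightarrow> finite V \<Longrightarrow> num_cover_colorings V VH EH = card (indep_transversals V L EH)"
  unfolding num_cover_colorings_def by (simp add: dp_cover_indep_sets_eq_indep_transversals)

definition map_edges :: "('b \<Rightarrow> 'c) \<Rightarrow> 'b set \<Rightarrow> ('b \<Rightarrow> 'b \<Rightarrow> bool) \<Rightarrow> 'c \<Rightarrow> 'c \<Rightarrow> bool" where
  "map_edges h VH EH p q \<longleftrightarrow> (\<exists>x\<in>VH. \<exists>y\<in>VH. p = h x \<and> q = h y \<and> EH x y)"

lemma map_edges_image_iff:
  "inj_on h VH \<Longrightarrow> x \<in> VH \<Longrightarrow> y \<in> VH \<Longrightarrow> map_edges h VH EH (h x) (h y) \<longleftrightarrow> EH x y"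
  unfolding map_edges_def by (auto dest: inj_onD)

lemma simple_graph_map_edges:
  assumes "simple_graph VH EH" "inj_on h VH"
  shows "simple_graph (h ` VH) (map_edges h VH EH)"
  unfolding simple_graph_def
proof (intro conjI allI impI)
  show "finite (h ` VH)" using simple_graph_finite[OF assms(1)] by simp
next
  fix p q assume "map_edges h VH EH p q"
  then obtain x y where xy: "x \<in> VH" "y \<in> VH" "p = h x" "q = h y" "EH x y"
    unfolding map_edges_def by blast
  then show "p \<in> h ` VH" "q \<in> h ` VH" by simp_all
  show "map_edges h VH EH q p" using xy simple_graph_sym[OF assms(1)] unfolding map_edges_def by blast
next
  fix p show "\<not> map_edges h VH EH p p"
  proof
    assume "map_edges h VH EH p p"
    then obtain x y where "x \<in> VH" "y \<in> VH" "h x = h y" "EH x y"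
      unfolding map_edges_def by metis
    then show False using inj_onD[OF assms(2)] simple_graph_irrefl[OF assms(1)] by metis
  qed
qed

lemma dp_cover_image:
  assumes cov: "dp_cover V E L VH EH" and h: "inj_on h VH"
  shows "dp_cover V E (\<lambda>v. h ` L v) (h ` VH) (map_edges h VH EH)"
proof -
  have LVH: "L u \<subseteq> VH" if "u \<in> V" for u using dp_cover_lists[OF cov] that by blast
  have edge_iff: "map_edges h VH EH (h x) (h y) \<longleftrightarrow> EH x y" if "x \<in> VH" "y \<in> VH" for x y
    using map_edges_image_iff[OF h that] .
  have disj: "h ` L u \<inter> h ` L v = {}" if "u \<in> V" "v \<in> V" "u \<noteq> v" for u v
    using inj_on_image_Int[OF h LVH[OF that(1)] LVH[OF that(2)]] dp_cover_disjoint[OF cov that] by simp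
  show ?thesis unfolding dp_cover_def
  proof (intro conjI ballI impI)
    show "simple_graph (h ` VH) (map_edges h VH EH)"
      using simple_graph_map_edges[OF dp_cover_graph[OF cov] h] .
    show "(\<Union>u\<in>V. h ` L u) = h ` VH" using dp_cover_lists[OF cov] by blast
  next
    fix u assume "u \<in> V" then show "h ` L u \<subseteq> h ` VH" using LVH by blast
  next
    fix u v assume "u \<in> V" "v \<in> V" "u \<noteq> v" then show "h ` L u \<inter> h ` L v = {}" by (rule disj)
  next
    fix u p q assume u: "u \<in> V" and pq: "p \<in> h ` L u" "q \<in> h ` L u" "p \<noteq> q"
    then obtain x y where "x \<in> L u" "y \<in> L u" "p = h x" "q = h y" by blast
    then show "map_edges h VH EH p q"
      using pq(3) edge_iff LVH[OF u] dp_cover_clique[OF cov u] by blast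
  next
    fix u v p q assume uv: "u \<in> V" "v \<in> V" and pq: "p \<in> h ` L u" "q \<in> h ` L v"
      and e: "map_edges h VH EH p q"
    then obtain x y where xy: "x \<in> L u" "y \<in> L v" "p = h x" "q = h y" by blast
    then have "EH x y" using e edge_iff LVH uv by blast
    then show "u = v \<or> E u v" by (rule dp_cover_cross[OF cov uv xy(1,2)])
  next
    fix u v p q q' assume uv: "u \<in> V" "v \<in> V" "E u v"
      and pq: "p \<in> h ` L u" "q \<in> h ` L v" "q' \<in> h ` L v"
      and e: "map_edges h VH EH p q \<and> map_edges h VH EH p q'"
    then obtain x y y' where xy: "x \<in> L u" "y \<in> L v" "y' \<in> L v" "p = h x" "q = h y" "q' = h y'"
      by blast
    then have "EH x y" "EH x y'" using e edge_iff LVH uv(1,2) by blast+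
    then show "q = q'" using dp_cover_matching[OF cov uv xy(1,2,3)] xy(5,6) by simp
  qed
qed

lemma num_cover_colorings_image:
  fixes h :: "'b \<Rightarrow> 'v \<times> nat" and V :: "'v set"
  assumes h: "inj_on h VH"
  shows "num_cover_colorings V (h ` VH) (map_edges h VH EH)
           = card {I. I \<subseteq> VH \<and> (\<forall>x\<in>I. \<forall>y\<in>I. \<not> EH x y) \<and> card I = card V}"
proof -
  let ?S = "{I. I \<subseteq> VH \<and> (\<forall>x\<in>I. \<forall>y\<in>I. \<not> EH x y) \<and> card I = card V}"
  have "{J. J \<subseteq> h ` VH \<and> (\<forall>p\<in>J. \<forall>q\<in>J. \<not> map_edges h VH EH p q) \<and> card J = card V} = image h ` ?S"
  proof (intro set_eqI iffI)
    fix J assume "J \<in> {J. J \<subseteq> h ` VH \<and> (\<forall>p\<in>J. \<forall>q\<in>J. \<not> map_edges h VH EH p q) \<and> card J = card V}"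
    then obtain I where I: "I \<subseteq> VH" "J = h ` I" "\<forall>p\<in>J. \<forall>q\<in>J. \<not> map_edges h VH EH p q" "card J = card V"
      by (auto simp: subset_image_iff)
    have "\<not> EH x y" if "x \<in> I" "y \<in> I" for x y
      using I(1-3) that map_edges_image_iff[OF h, of x y EH] by blast
    then have "I \<in> ?S"
      using I card_image[OF inj_on_subset[OF h I(1)]] by simp
    then show "J \<in> image h ` ?S" using I(2) by blast
  next
    fix J assume "J \<in> image h ` ?S"
    then obtain I where I: "I \<in> ?S" "J = h ` I" by blast
    then have I': "I \<subseteq> VH" "\<forall>x\<in>I. \<forall>y\<in>I. \<not> EH x y" "card I = card V" by auto
    have "\<not> map_edges h VH EH (h x) (h y)" if "x \<in> I" "y \<in> I" for x y
      using I' that map_edges_image_iff[OF h, of x y EH] by blast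
    then show "J \<in> {J. J \<subseteq> h ` VH \<and> (\<forall>p\<in>J. \<forall>q\<in>J. \<not> map_edges h VH EH p q) \<and> card J = card V}"
      using I(2) I' card_image[OF inj_on_subset[OF h I'(1)]] by auto
  qed
  moreover have "inj_on (image h) ?S" using inj_on_image_Pow[OF h] by (rule inj_on_subset) blast
  ultimately show ?thesis unfolding num_cover_colorings_def by (simp add: card_image)
qed

text \<open>\<open>DP_poly\<close> ranges over covers whose vertices are pairs of a graph vertex and a number; an
  injection into the numbers relabels any finite cover into that form.\<close>
lemma DP_poly_le_card_indep_transversals:
  fixes L :: "'v \<Rightarrow> 'b set"
  assumes cov: "dp_cover V E L VH EH" and "finite V" and k: "\<And>v. v \<in> V \<Longrightarrow> card (L v) = k"
  shows "DP_poly V E k \<le> card (indep_transversals V L EH)"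
proof -
  obtain f :: "'b \<Rightarrow> nat" where f: "inj_on f VH"
    using finite_imp_inj_to_nat_seg[OF simple_graph_finite[OF dp_cover_graph[OF cov]]] by blast
  define h where "h z = (undefined :: 'v, f z)" for z
  have h: "inj_on h VH" using f unfolding h_def inj_on_def by simp
  have LVH: "L u \<subseteq> VH" if "u \<in> V" for u using dp_cover_lists[OF cov] that by blast
  have "is_m_fold_cover V E k (\<lambda>v. h ` L v) (h ` VH) (map_edges h VH EH)"
    unfolding is_m_fold_cover_def is_cover_iff_dp_cover
    using dp_cover_image[OF cov h] k card_image[OF inj_on_subset[OF h LVH]] by simp
  then have "DP_poly V E k \<le> num_cover_colorings V (h ` VH) (map_edges h VH EH)"
    unfolding DP_poly_def by (intro cInf_lower) auto
  then show ?thesis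
    using num_cover_colorings_image[OF h] dp_cover_indep_sets_eq_indep_transversals[OF cov \<open>finite V\<close>]
    by simp
qed

definition restrict_edges :: "'b set \<Rightarrow> ('b \<Rightarrow> 'b \<Rightarrow> bool) \<Rightarrow> 'b \<Rightarrow> 'b \<Rightarrow> bool" where
  "restrict_edges U EH p q \<longleftrightarrow> p \<in> U \<and> q \<in> U \<and> EH p q"

lemma indep_transversals_restrict_edges:
  "indep_transversals V A (restrict_edges (\<Union>v\<in>V. A v) EH) = indep_transversals V A EH"
  unfolding indep_transversals_def
proof (rule Collect_cong)
  fix I
  let ?U = "\<Union>v\<in>V. A v"
  have "(\<forall>x\<in>I. \<forall>y\<in>I. \<not> restrict_edges ?U EH x y) \<longleftrightarrow> (\<forall>x\<in>I. \<forall>y\<in>I. \<not> EH x y)" if "I \<subseteq> ?U"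
    using subsetD[OF that] unfolding restrict_edges_def by meson
  then show "(I \<subseteq> ?U \<and> (\<forall>x\<in>I. \<forall>y\<in>I. \<not> restrict_edges ?U EH x y) \<and> (\<forall>v\<in>V. card (I \<inter> A v) = 1)) \<longleftrightarrow>
        (I \<subseteq> ?U \<and> (\<forall>x\<in>I. \<forall>y\<in>I. \<not> EH x y) \<and> (\<forall>v\<in>V. card (I \<inter> A v) = 1))"
    by blast
qed

lemma simple_graph_restrict_edges:
  assumes "simple_graph VH EH" "U \<subseteq> VH"
  shows "simple_graph U (restrict_edges U EH)"
  unfolding simple_graph_def restrict_edges_def
  using finite_subset[OF assms(2) simple_graph_finite[OF assms(1)]]
    simple_graph_sym[OF assms(1)] simple_graph_irrefl[OF assms(1)]
  by blast

lemma dp_cover_restrict: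
  assumes cov: "dp_cover V' E' L VH EH" and f: "inj_on f V" "f ` V \<subseteq> V'"
    and E: "\<And>u v. u \<in> V \<Longrightarrow> v \<in> V \<Longrightarrow> E' (f u) (f v) \<longleftrightarrow> E u v"
    and B: "\<And>v. v \<in> V \<Longrightarrow> B v \<subseteq> L (f v)"
  shows "dp_cover V E B (\<Union>v\<in>V. B v) (restrict_edges (\<Union>v\<in>V. B v) EH)"
proof -
  let ?U = "\<Union>v\<in>V. B v"
  have fV: "f v \<in> V'" if "v \<in> V" for v using f(2) that by blast
  have "?U \<subseteq> VH" using B fV dp_cover_lists[OF cov] by blast
  note graph = simple_graph_restrict_edges[OF dp_cover_graph[OF cov] this]
  show ?thesis unfolding dp_cover_def
  proof (intro conjI ballI impI)
    fix u v assume uv: "u \<in> V" "v \<in> V" "u \<noteq> v"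
    then have "f u \<noteq> f v" using inj_onD[OF f(1)] by blast
    then have "L (f u) \<inter> L (f v) = {}" using dp_cover_disjoint[OF cov fV[OF uv(1)] fV[OF uv(2)]] by simp
    then show "B u \<inter> B v = {}" using B[OF uv(1)] B[OF uv(2)] by blast
  next
    fix u x y assume u: "u \<in> V" and xy: "x \<in> B u" "y \<in> B u" "x \<noteq> y"
    then have "EH x y" using dp_cover_clique[OF cov fV[OF u]] B[OF u] by blast
    then show "restrict_edges ?U EH x y" using u xy unfolding restrict_edges_def by blast
  next
    fix u v x y assume uv: "u \<in> V" "v \<in> V" and xy: "x \<in> B u" "y \<in> B v"
      and e: "restrict_edges ?U EH x y"
    have "f u = f v \<or> E' (f u) (f v)"
      by (rule dp_cover_cross[OF cov fV[OF uv(1)] fV[OF uv(2)]])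
        (use xy e B[OF uv(1)] B[OF uv(2)] in \<open>auto simp: restrict_edges_def\<close>)
    then show "u = v \<or> E u v" using inj_onD[OF f(1) _ uv] E[OF uv] by blast
  next
    fix u v x y y' assume uv: "u \<in> V" "v \<in> V" "E u v" and xy: "x \<in> B u" "y \<in> B v" "y' \<in> B v"
      and e: "restrict_edges ?U EH x y \<and> restrict_edges ?U EH x y'"
    show "y = y'"
      by (rule dp_cover_matching[OF cov fV[OF uv(1)] fV[OF uv(2)]])
        (use E[OF uv(1,2)] uv(3) xy e B[OF uv(1)] B[OF uv(2)] in \<open>auto simp: restrict_edges_def\<close>)
  next
    show "simple_graph ?U (restrict_edges ?U EH)" by (rule graph)
  qed blast+
qed

definition add_edge :: "'b \<Rightarrow> 'b \<Rightarrow> ('b \<Rightarrow> 'b \<Rightarrow> bool) \<Rightarrow> 'b \<Rightarrow> 'b \<Rightarrow> bool" where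
  "add_edge a b EH p q \<longleftrightarrow> EH p q \<or> (p = a \<and> q = b) \<or> (p = b \<and> q = a)"

lemma dp_cover_add_edge:
  assumes cov: "dp_cover V E L VH EH" and G: "simple_graph V E"
    and uv: "E u v" and ab: "a \<in> L u" "b \<in> L v"
    and free: "\<And>q. q \<in> L v \<Longrightarrow> \<not> EH a q" "\<And>q. q \<in> L u \<Longrightarrow> \<not> EH b q"
  shows "dp_cover V E L VH (add_edge a b EH)"
proof -
  have u: "u \<in> V" and v: "v \<in> V" using simple_graph_edge_in[OF G uv] by simp_all
  have "u \<noteq> v" using uv simple_graph_irrefl[OF G] by blast
  then have "a \<noteq> b" using dp_cover_owner[OF cov u v] ab by blast
  have abVH: "a \<in> VH" "b \<in> VH" using ab u v dp_cover_lists[OF cov] by blast+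
  have new_edge: "EH x y \<or> (x = a \<and> y = b \<and> w = u \<and> w' = v) \<or> (x = b \<and> y = a \<and> w = v \<and> w' = u)"
    if e: "add_edge a b EH x y" and w: "w \<in> V" "w' \<in> V" "x \<in> L w" "y \<in> L w'" for x y w w'
  proof -
    consider "EH x y" | "x = a" "y = b" | "x = b" "y = a" using e unfolding add_edge_def by blast
    then show ?thesis
      by cases (use dp_cover_owner[OF cov] w u v ab in blast)+
  qed
  have graph: "simple_graph VH (add_edge a b EH)"
    unfolding simple_graph_def add_edge_def
    using simple_graphD[OF dp_cover_graph[OF cov]] abVH \<open>a \<noteq> b\<close> by blast
  show ?thesis unfolding dp_cover_def
  proof (intro conjI ballI impI)
    show "simple_graph VH (add_edge a b EH)" by (rule graph)
  next
    fix w x y assume "w \<in> V" "x \<in> L w" "y \<in> L w" "x \<noteq> y"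
    then show "add_edge a b EH x y" using dp_cover_clique[OF cov] unfolding add_edge_def by blast
  next
    fix w w' x y assume ww: "w \<in> V" "w' \<in> V" and xy: "x \<in> L w" "y \<in> L w'"
      and "add_edge a b EH x y"
    then consider "EH x y" | "w = u" "w' = v" | "w = v" "w' = u"
      using new_edge by blast
    then show "w = w' \<or> E w w'"
      by cases (use dp_cover_cross[OF cov ww xy] uv simple_graph_sym[OF G uv] in blast)+
  next
    fix w w' x y y' assume ww: "w \<in> V" "w' \<in> V" "E w w'" and xy: "x \<in> L w" "y \<in> L w'" "y' \<in> L w'"
      and e: "add_edge a b EH x y \<and> add_edge a b EH x y'"
    have "EH x y \<or> (x = a \<and> y = b \<and> w = u \<and> w' = v) \<or> (x = b \<and> y = a \<and> w = v \<and> w' = u)"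
      using new_edge[of x y w w'] e ww xy by blast
    moreover have "EH x y' \<or> (x = a \<and> y' = b \<and> w = u \<and> w' = v) \<or> (x = b \<and> y' = a \<and> w = v \<and> w' = u)"
      using new_edge[of x y' w w'] e ww xy by blast
    ultimately show "y = y'"
      using dp_cover_matching[OF cov ww xy] free xy \<open>a \<noteq> b\<close> by blast
  qed (use dp_cover_lists[OF cov] dp_cover_disjoint[OF cov] in blast)+
qed

lemma is_m_fold_cover_trivial:
  assumes "simple_graph V E"
  shows "is_m_fold_cover V E m (\<lambda>v. {v} \<times> {..<m}) (V \<times> {..<m})
           (\<lambda>p q. p \<in> V \<times> {..<m} \<and> q \<in> V \<times> {..<m} \<and> fst p = fst q \<and> p \<noteq> q)"
  using simple_graphD[OF assms]
  unfolding is_m_fold_cover_def is_cover_def simple_graph_def by (auto simp: card_cartesian_product)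

section \<open>Counting colourings greedily\<close>

lemma card_neighbours_of_indep_transversal:
  assumes cov: "dp_cover V E A VH EH" and "finite V" "U \<subseteq> V" "z \<in> V"
    and I: "I \<in> indep_transversals (U - {z}) A EH"
  shows "card {x \<in> A z. \<exists>y\<in>I. EH x y} \<le> card {w \<in> U - {z}. \<exists>x\<in>A z. \<exists>y\<in>A w. EH x y}"
proof -
  let ?R = "{w \<in> U - {z}. \<exists>x\<in>A z. \<exists>y\<in>A w. EH x y}"
  let ?N = "\<lambda>w. {x \<in> A z. \<exists>y\<in>I \<inter> A w. EH x y}"
  have I': "I \<subseteq> (\<Union>w\<in>U - {z}. A w)" "\<And>w. w \<in> U - {z} \<Longrightarrow> card (I \<inter> A w) = 1"
    using I unfolding indep_transversals_def by auto
  have "?R \<subseteq> V" using \<open>U \<subseteq> V\<close> by blast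
  then have "finite ?R" using \<open>finite V\<close> by (rule finite_subset)
  have N_le_1: "card (?N w) \<le> 1" if w: "w \<in> ?R" for w
  proof -
    have "w \<in> U - {z}" using w by simp
    then obtain y where y: "I \<inter> A w = {y}" using card_1_singletonE[OF I'(2)] by metis
    have "w \<in> V" "w \<noteq> z" using \<open>w \<in> U - {z}\<close> \<open>U \<subseteq> V\<close> by auto
    have "?N w \<subseteq> {x \<in> A z. EH y x}"
    proof
      fix x assume "x \<in> ?N w"
      then obtain y' where "x \<in> A z" "y' \<in> I \<inter> A w" "EH x y'" by blast
      moreover have "y' = y" using \<open>y' \<in> I \<inter> A w\<close> y by blast
      ultimately show "x \<in> {x \<in> A z. EH y x}"
        using simple_graph_sym[OF dp_cover_graph[OF cov] \<open>EH x y'\<close>] by simp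
    qed
    then have "card (?N w) \<le> card {x \<in> A z. EH y x}"
      using dp_cover_finite_list[OF cov \<open>z \<in> V\<close>] by (intro card_mono) auto
    also have "\<dots> \<le> 1"
      using dp_cover_card_neighbours_le_1[OF cov \<open>w \<in> V\<close> \<open>z \<in> V\<close> \<open>w \<noteq> z\<close>] y by blast
    finally show ?thesis .
  qed
  have "{x \<in> A z. \<exists>y\<in>I. EH x y} \<subseteq> (\<Union>w\<in>?R. ?N w)"
  proof
    fix x assume "x \<in> {x \<in> A z. \<exists>y\<in>I. EH x y}"
    then obtain y where xy: "x \<in> A z" "y \<in> I" "EH x y" by blast
    then obtain w where "w \<in> U - {z}" "y \<in> A w" using I'(1) by blast
    then have "w \<in> ?R" "x \<in> ?N w" using xy by blast+
    then show "x \<in> (\<Union>w\<in>?R. ?N w)" by blast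
  qed
  then have "card {x \<in> A z. \<exists>y\<in>I. EH x y} \<le> card (\<Union>w\<in>?R. ?N w)"
    using dp_cover_finite_list[OF cov \<open>z \<in> V\<close>] by (intro card_mono) (auto intro: finite_subset[of _ "A z"])
  also have "\<dots> \<le> (\<Sum>w\<in>?R. card (?N w))" using card_UN_le[OF \<open>finite ?R\<close>] .
  also have "\<dots> \<le> (\<Sum>w\<in>?R. 1)" using N_le_1 by (rule sum_mono)
  finally show ?thesis by simp
qed

lemma insert_into_indep_transversal:
  assumes cov: "dp_cover V E A VH EH" and "U \<subseteq> V" "z \<in> U"
    and I: "I \<in> indep_transversals (U - {z}) A EH"
    and x: "x \<in> A z" "\<forall>y\<in>I. \<not> EH x y"
  shows "insert x I \<in> indep_transversals U A EH"
proof -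
  have I': "I \<subseteq> (\<Union>w\<in>U - {z}. A w)" "\<forall>y\<in>I. \<forall>y'\<in>I. \<not> EH y y'"
    "\<And>w. w \<in> U - {z} \<Longrightarrow> card (I \<inter> A w) = 1"
    using I unfolding indep_transversals_def by auto
  have disj: "A w \<inter> A z = {}" if "w \<in> U - {z}" for w
    using dp_cover_disjoint[OF cov] that \<open>U \<subseteq> V\<close> \<open>z \<in> U\<close> by blast
  have "card (insert x I \<inter> A w) = 1" if "w \<in> U" for w
  proof (cases "w = z")
    case True
    then have "insert x I \<inter> A w = {x}" using I'(1) disj x(1) by blast
    then show ?thesis by simp
  next
    case False
    then have "insert x I \<inter> A w = I \<inter> A w" using disj[of w] that x(1) by blast
    then show ?thesis using I'(3)[of w] that False by simp
  qed
  moreover have "\<not> EH p q" if "p \<in> insert x I" "q \<in> insert x I" for p q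
  proof
    assume e: "EH p q"
    show False
    proof (cases "p = x")
      case True
      then show ?thesis using e x(2) that(2) simple_graph_irrefl[OF dp_cover_graph[OF cov]] by blast
    next
      case False
      then show ?thesis
        using e x(2) that I'(2) simple_graph_sym[OF dp_cover_graph[OF cov] e] by blast
    qed
  qed
  moreover have "insert x I \<subseteq> (\<Union>w\<in>U. A w)" using I'(1) x(1) \<open>z \<in> U\<close> by blast
  ultimately show ?thesis unfolding indep_transversals_def by blast
qed

lemma card_indep_transversals_extend:
  assumes cov: "dp_cover V E A VH EH" and "finite V" "U \<subseteq> V" "z \<in> U"
    and room: "c + card {w \<in> U - {z}. \<exists>x\<in>A z. \<exists>y\<in>A w. EH x y} \<le> card (A z)"
  shows "c * card (indep_transversals (U - {z}) A EH) \<le> card (indep_transversals U A EH)"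
proof -
  let ?T = "indep_transversals (U - {z}) A EH"
  define free where "free I = {x \<in> A z. \<forall>y\<in>I. \<not> EH x y}" for I
  have z: "z \<in> V" using assms(3,4) by blast
  have fin: "finite (A w)" if "w \<in> V" for w using dp_cover_finite_list[OF cov that] .
  have "finite U" using \<open>U \<subseteq> V\<close> \<open>finite V\<close> by (rule finite_subset)
  have fin_U: "finite (A w)" if "w \<in> U" for w using fin \<open>U \<subseteq> V\<close> that by blast
  have "finite ?T" using \<open>finite U\<close> fin_U by (intro finite_indep_transversals) auto
  have c_le: "c \<le> card (free I)" if I: "I \<in> ?T" for I
  proof -
    have "free I = A z - {x \<in> A z. \<exists>y\<in>I. EH x y}" unfolding free_def by blast
    then have "card (free I) = card (A z) - card {x \<in> A z. \<exists>y\<in>I. EH x y}"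
      using fin[OF z] by (simp add: card_Diff_subset)
    then show ?thesis
      using card_neighbours_of_indep_transversal[OF cov assms(2,3) z I] room by linarith
  qed
  have disj_z: "I \<inter> A z = {}" if "I \<in> ?T" for I
    using that dp_cover_disjoint[OF cov] assms(3,4) unfolding indep_transversals_def by blast
  have inj: "inj_on (\<lambda>(I, x). insert x I) (Sigma ?T free)"
  proof (rule inj_onI, clarify)
    fix I x J y assume "I \<in> ?T" "x \<in> free I" "J \<in> ?T" "y \<in> free J" and eq: "insert x I = insert y J"
    then have "x \<in> A z" "y \<in> A z" "I \<inter> A z = {}" "J \<inter> A z = {}"
      using disj_z unfolding free_def by auto
    then have "I = insert x I - A z" "J = insert y J - A z" "x = y"
      using eq by blast+
    then show "I = J \<and> x = y" using eq by simp
  qed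
  have ext: "(\<lambda>(I, x). insert x I) ` Sigma ?T free \<subseteq> indep_transversals U A EH"
    using insert_into_indep_transversal[OF cov assms(3,4)] unfolding free_def by auto
  have "c * card ?T = (\<Sum>I\<in>?T. c)" by simp
  also have "\<dots> \<le> (\<Sum>I\<in>?T. card (free I))" using c_le by (rule sum_mono)
  also have "\<dots> = card (Sigma ?T free)" using \<open>finite ?T\<close> fin[OF z] unfolding free_def by simp
  also have "\<dots> = card ((\<lambda>(I, x). insert x I) ` Sigma ?T free)" using card_image[OF inj] by simp
  also have "\<dots> \<le> card (indep_transversals U A EH)"
    using finite_indep_transversals[OF \<open>finite U\<close> fin_U] ext by (rule card_mono)
  finally show ?thesis .
qed

text \<open>Colour the vertices in increasing order of r: when v is reached, each earlier vertex whose list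
  is joined to A v excludes at most one colour of A v.\<close>
lemma card_indep_transversals_greedy:
  fixes r :: "'v \<Rightarrow> nat"
  assumes cov: "dp_cover V E A VH EH" and "finite V"
    and room: "\<And>v. v \<in> V \<Longrightarrow>
      c v + card {w \<in> V. w \<noteq> v \<and> r w \<le> r v \<and> (\<exists>x\<in>A v. \<exists>y\<in>A w. EH x y)} \<le> card (A v)"
  shows "(\<Prod>v\<in>V. c v) \<le> card (indep_transversals V A EH)"
proof -
  have "(\<Prod>v\<in>U. c v) \<le> card (indep_transversals U A EH)" if "U \<subseteq> V" for U
    using finite_subset[OF that \<open>finite V\<close>] that
  proof (induction U rule: finite_remove_induct)
    case empty
    have "indep_transversals {} A EH = {{}}" unfolding indep_transversals_def by auto
    then show ?case by simp
  next
    case (remove U)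
    have "finite (r ` U)" "r ` U \<noteq> {}" using remove.hyps by auto
    then have "Max (r ` U) \<in> r ` U" by (rule Max_in)
    then obtain z where z: "z \<in> U" "r z = Max (r ` U)" by (metis imageE)
    then have z_max: "r w \<le> r z" if "w \<in> U" for w
      using Max_ge[OF \<open>finite (r ` U)\<close>] that by simp
    have "{w \<in> U - {z}. \<exists>x\<in>A z. \<exists>y\<in>A w. EH x y}
            \<subseteq> {w \<in> V. w \<noteq> z \<and> r w \<le> r z \<and> (\<exists>x\<in>A z. \<exists>y\<in>A w. EH x y)}"
      using z_max remove.prems by blast
    then have "card {w \<in> U - {z}. \<exists>x\<in>A z. \<exists>y\<in>A w. EH x y}
            \<le> card {w \<in> V. w \<noteq> z \<and> r w \<le> r z \<and> (\<exists>x\<in>A z. \<exists>y\<in>A w. EH x y)}"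
      using \<open>finite V\<close> by (intro card_mono) auto
    moreover have "z \<in> V" using z(1) remove.prems by blast
    ultimately have "c z + card {w \<in> U - {z}. \<exists>x\<in>A z. \<exists>y\<in>A w. EH x y} \<le> card (A z)"
      using room[of z] by linarith
    note step = card_indep_transversals_extend[OF cov \<open>finite V\<close> remove.prems z(1) this]
    have "(\<Prod>v\<in>U. c v) = c z * (\<Prod>v\<in>U - {z}. c v)"
      using z(1) remove.hyps(1) by (simp add: prod.remove)
    also have "\<dots> \<le> c z * card (indep_transversals (U - {z}) A EH)"
      using remove.IH[OF z(1)] remove.prems by (intro mult_le_mono2) blast
    also have "\<dots> \<le> card (indep_transversals U A EH)" by (rule step)
    finally show ?case .
  qed
  then show ?thesis by blast
qed

section \<open>Degeneracy orderings and the coloring number\<close>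

definition degeneracy_order :: "'a set \<Rightarrow> ('a \<Rightarrow> 'a \<Rightarrow> bool) \<Rightarrow> ('a \<Rightarrow> nat) \<Rightarrow> nat \<Rightarrow> bool" where
  "degeneracy_order V E r d \<longleftrightarrow> inj_on r V \<and> (\<forall>v\<in>V. card {w \<in> V. E v w \<and> r w < r v} \<le> d)"

lemma col_bounds:
  assumes "finite V"
  shows col_le_card: "col V E \<le> card V"
    and col_attained: "\<exists>xs. distinct xs \<and> set xs = V \<and>
                         (\<forall>i < length xs. card {j. j < i \<and> E (xs ! i) (xs ! j)} < col V E)"
proof -
  define P where "P d \<longleftrightarrow> (\<exists>xs. distinct xs \<and> set xs = V \<and>
      (\<forall>i < length xs. card {j. j < i \<and> E (xs ! i) (xs ! j)} < d))" for d
  obtain xs where xs: "set xs = V" "distinct xs" using finite_distinct_list[OF assms] by blast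
  have "card {j. j < i \<and> E (xs ! i) (xs ! j)} < card V" if "i < length xs" for i
  proof -
    have "card {j. j < i \<and> E (xs ! i) (xs ! j)} \<le> card {..<i}" by (rule card_mono) auto
    also have "\<dots> < card V" using that xs distinct_card by fastforce
    finally show ?thesis .
  qed
  then have "P (card V)" unfolding P_def using xs by blast
  then show "col V E \<le> card V" and "P (col V E)"
    unfolding col_def P_def by (rule Least_le, rule LeastI)
qed

lemma degeneracy_order_col:
  assumes "finite V"
  obtains r where "degeneracy_order V E r (col V E - 1)"
proof -
  obtain xs where xs: "distinct xs" "set xs = V"
    "\<And>i. i < length xs \<Longrightarrow> card {j. j < i \<and> E (xs ! i) (xs ! j)} < col V E"
    using col_attained[OF assms] by blast
  define I where "I = {..<length xs}"
  have inj: "inj_on (nth xs) I" unfolding I_def using xs(1) by (simp add: inj_on_nth)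
  have img: "nth xs ` I = V" unfolding I_def using xs(2) by (auto simp: in_set_conv_nth)
  define r where "r = the_inv_into I (nth xs)"
  have r_in: "r v \<in> I" if "v \<in> V" for v
    unfolding r_def using the_inv_into_into[OF inj, of v] img that by blast
  have nth_r: "xs ! r v = v" if "v \<in> V" for v
    unfolding r_def using f_the_inv_into_f[OF inj, of v] img that by blast
  have "inj_on r V" by (rule inj_onI) (metis nth_r)
  moreover have "card {w \<in> V. E v w \<and> r w < r v} \<le> col V E - 1" if v: "v \<in> V" for v
  proof -
    have "{w \<in> V. E v w \<and> r w < r v} \<subseteq> nth xs ` {j. j < r v \<and> E (xs ! r v) (xs ! j)}"
      using nth_r v by (auto intro!: image_eqI[of _ "nth xs"])
    then have "card {w \<in> V. E v w \<and> r w < r v} \<le> card (nth xs ` {j. j < r v \<and> E (xs ! r v) (xs ! j)})"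
      by (rule card_mono[rotated]) simp
    also have "\<dots> \<le> card {j. j < r v \<and> E (xs ! r v) (xs ! j)}" by (rule card_image_le) simp
    also have "\<dots> < col V E" using xs(3) r_in[OF v] unfolding I_def by simp
    finally show ?thesis by simp
  qed
  ultimately show ?thesis using that unfolding degeneracy_order_def by blast
qed

section \<open>Covers of the join\<close>

lemma join_V_simps [simp]: "None \<in> join_V V" "Some v \<in> join_V V \<longleftrightarrow> v \<in> V"
  unfolding join_V_def by auto

lemma join_E_simps [simp]:
  "\<not> join_E V E None None"
  "join_E V E None (Some v) \<longleftrightarrow> v \<in> V"
  "join_E V E (Some v) None \<longleftrightarrow> v \<in> V"
  "join_E V E (Some u) (Some v) \<longleftrightarrow> E u v"
  unfolding join_E_def by auto

lemma finite_join_V: "finite V \<Longrightarrow> finite (join_V V)"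
  unfolding join_V_def by simp

lemma simple_graph_join:
  assumes "simple_graph V E"
  shows "simple_graph (join_V V) (join_E V E)"
  using simple_graphD[OF assms] finite_join_V unfolding simple_graph_def join_E_def join_V_def
  by (auto split: option.splits)

locale join_cover =
  fixes V :: "'a set" and E :: "'a \<Rightarrow> 'a \<Rightarrow> bool" and m :: nat
    and L :: "'a option \<Rightarrow> 'b set" and VH :: "'b set" and EH :: "'b \<Rightarrow> 'b \<Rightarrow> bool"
  assumes graph: "simple_graph V E"
    and cover: "dp_cover (join_V V) (join_E V E) L VH EH"
    and card_list: "\<And>w. w \<in> join_V V \<Longrightarrow> card (L w) = m"
begin

abbreviation apex_list :: "'b set" where
  "apex_list \<equiv> L None"

lemma finite_V: "finite V"
  using simple_graph_finite[OF graph] .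

lemma finite_list: "w \<in> join_V V \<Longrightarrow> finite (L w)"
  using dp_cover_finite_list[OF cover] .

lemma EH_sym: "EH p q \<Longrightarrow> EH q p"
  using simple_graph_sym[OF dp_cover_graph[OF cover]] .

lemma EH_irrefl: "\<not> EH p p"
  using simple_graph_irrefl[OF dp_cover_graph[OF cover]] .

lemma base_lists_disjoint: "u \<in> V \<Longrightarrow> v \<in> V \<Longrightarrow> u \<noteq> v \<Longrightarrow> L (Some u) \<inter> L (Some v) = {}"
  using dp_cover_disjoint[OF cover, of "Some u" "Some v"] by simp

lemma apex_base_disjoint: "v \<in> V \<Longrightarrow> apex_list \<inter> L (Some v) = {}"
  using dp_cover_disjoint[OF cover, of None "Some v"] by simp

lemma base_matching:
  "E u v \<Longrightarrow> p \<in> L (Some u) \<Longrightarrow> q \<in> L (Some v) \<Longrightarrow> q' \<in> L (Some v) \<Longrightarrow> EH p q \<Longrightarrow> EH p q'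
    \<Longrightarrow> q = q'"
  using dp_cover_matching[OF cover, of "Some u" "Some v"] simple_graph_edge_in[OF graph] by simp

lemma apex_matching:
  "v \<in> V \<Longrightarrow> x \<in> apex_list \<Longrightarrow> q \<in> L (Some v) \<Longrightarrow> q' \<in> L (Some v) \<Longrightarrow> EH x q \<Longrightarrow> EH x q'
    \<Longrightarrow> q = q'"
  using dp_cover_matching[OF cover, of None "Some v"] by simp

lemma base_apex_matching:
  "v \<in> V \<Longrightarrow> p \<in> L (Some v) \<Longrightarrow> x \<in> apex_list \<Longrightarrow> x' \<in> apex_list \<Longrightarrow> EH p x \<Longrightarrow> EH p x'
    \<Longrightarrow> x = x'"
  using dp_cover_matching[OF cover, of "Some v" None] by simp

lemma dp_cover_base:
  assumes "\<And>v. v \<in> V \<Longrightarrow> B v \<subseteq> L (Some v)"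
  shows "dp_cover V E B (\<Union>v\<in>V. B v) (restrict_edges (\<Union>v\<in>V. B v) EH)"
  by (rule dp_cover_restrict[OF cover]) (use assms in auto)

lemma indep_transversals_base_mono:
  assumes "\<And>v. v \<in> V \<Longrightarrow> B v \<subseteq> A v" "\<And>v. v \<in> V \<Longrightarrow> A v \<subseteq> L (Some v)"
    and "\<And>p q. p \<in> (\<Union>v\<in>V. B v) \<Longrightarrow> q \<in> (\<Union>v\<in>V. B v) \<Longrightarrow> EH p q \<Longrightarrow> EH' p q"
  shows "indep_transversals V B EH' \<subseteq> indep_transversals V A EH"
proof (rule indep_transversals_mono)
  fix u v assume "u \<in> V" "v \<in> V" "u \<noteq> v"
  then show "A u \<inter> A v = {}" using base_lists_disjoint assms(2) by blast
qed (use assms in auto)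

lemma finite_indep_transversals_base:
  assumes "\<And>v. v \<in> V \<Longrightarrow> A v \<subseteq> L (Some v)"
  shows "finite (indep_transversals V A EH)"
proof (rule finite_indep_transversals[OF finite_V])
  fix v assume "v \<in> V"
  then show "finite (A v)" using finite_subset[OF assms finite_list[of "Some v"]] by simp
qed

lemma DP_poly_le_base:
  assumes "\<And>v. v \<in> V \<Longrightarrow> B v \<subseteq> L (Some v)" "\<And>v. v \<in> V \<Longrightarrow> card (B v) = k"
  shows "DP_poly V E k \<le> card (indep_transversals V B EH)"
  using DP_poly_le_card_indep_transversals[OF dp_cover_base[OF assms(1)] finite_V assms(2)]
  by (simp add: indep_transversals_restrict_edges)

lemma card_indep_transversals_base_greedy:
  fixes r :: "'a \<Rightarrow> nat"
  assumes A: "\<And>v. v \<in> V \<Longrightarrow> A v \<subseteq> L (Some v)"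
    and room: "\<And>v. v \<in> V \<Longrightarrow>
      c v + card {w \<in> V. w \<noteq> v \<and> r w \<le> r v \<and> (\<exists>x\<in>A v. \<exists>y\<in>A w. EH x y)} \<le> card (A v)"
  shows "(\<Prod>v\<in>V. c v) \<le> card (indep_transversals V A EH)"
proof -
  let ?EH = "restrict_edges (\<Union>v\<in>V. A v) EH"
  have same: "{w \<in> V. w \<noteq> v \<and> r w \<le> r v \<and> (\<exists>x\<in>A v. \<exists>y\<in>A w. ?EH x y)}
          = {w \<in> V. w \<noteq> v \<and> r w \<le> r v \<and> (\<exists>x\<in>A v. \<exists>y\<in>A w. EH x y)}" if "v \<in> V" for v
    using that unfolding restrict_edges_def by blast
  have room': "c v + card {w \<in> V. w \<noteq> v \<and> r w \<le> r v \<and> (\<exists>x\<in>A v. \<exists>y\<in>A w. ?EH x y)}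
                \<le> card (A v)" if "v \<in> V" for v
    unfolding same[OF that] by (rule room[OF that])
  have "(\<Prod>v\<in>V. c v) \<le> card (indep_transversals V A ?EH)"
    using card_indep_transversals_greedy[OF dp_cover_base[OF A] finite_V room'] .
  then show ?thesis by (simp add: indep_transversals_restrict_edges)
qed

definition residual :: "'b \<Rightarrow> 'a \<Rightarrow> 'b set" where
  "residual x v = L (Some v) - {z. EH x z}"

lemma residual_subset: "residual x v \<subseteq> L (Some v)"
  unfolding residual_def by blast

lemma card_residual_ge:
  assumes x: "x \<in> apex_list" and v: "v \<in> V"
  shows "m - 1 \<le> card (residual x v)"
proof -
  have "card {z \<in> L (Some v). EH x z} \<le> 1"
    using dp_cover_card_neighbours_le_1[OF cover, of None "Some v" x] x v by simp
  moreover have "residual x v = L (Some v) - {z \<in> L (Some v). EH x z}"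
    unfolding residual_def by blast
  moreover have "card (L (Some v)) = m" using card_list[of "Some v"] v by simp
  ultimately show ?thesis
    using finite_list[of "Some v"] v by (simp add: card_Diff_subset)
qed

lemma join_lists_eq: "(\<Union>w\<in>join_V V. L w) = apex_list \<union> (\<Union>v\<in>V. L (Some v))"
  unfolding join_V_def by simp

lemma base_union_apex_disjoint: "(\<Union>v\<in>V. L (Some v)) \<inter> apex_list = {}"
  using apex_base_disjoint by blast

lemma insert_apex_colour:
  assumes x: "x \<in> apex_list" and J: "J \<in> indep_transversals V (residual x) EH"
  shows "insert x J \<in> indep_transversals (join_V V) L EH"
proof -
  have J': "J \<subseteq> (\<Union>v\<in>V. residual x v)" "\<forall>p\<in>J. \<forall>q\<in>J. \<not> EH p q"
    "\<And>v. v \<in> V \<Longrightarrow> card (J \<inter> residual x v) = 1"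
    using J unfolding indep_transversals_def by auto
  have J_base: "J \<subseteq> (\<Union>v\<in>V. L (Some v))" using J'(1) residual_subset[of x] by blast
  then have J_apex: "J \<inter> apex_list = {}" using base_union_apex_disjoint by blast
  have no_edge_x: "\<not> EH x q" if "q \<in> J" for q
    using J'(1) that unfolding residual_def by blast
  have on_base: "insert x J \<inter> L (Some v) = J \<inter> residual x v" if v: "v \<in> V" for v
  proof
    show "insert x J \<inter> L (Some v) \<subseteq> J \<inter> residual x v"
    proof
      fix p assume p: "p \<in> insert x J \<inter> L (Some v)"
      then have "p \<in> J" using x apex_base_disjoint[OF v] by blast
      then obtain v' where v': "v' \<in> V" "p \<in> residual x v'" using J'(1) by blast
      have "p \<in> L (Some v')" using v'(2) residual_subset[of x v'] by blast
      then have "v' = v" using p base_lists_disjoint[OF v'(1) v] by blast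
      then show "p \<in> J \<inter> residual x v" using \<open>p \<in> J\<close> v' by simp
    qed
    show "J \<inter> residual x v \<subseteq> insert x J \<inter> L (Some v)" using residual_subset[of x v] by blast
  qed
  have "card (insert x J \<inter> L w) = 1" if "w \<in> join_V V" for w
  proof (cases w)
    case None
    then have "insert x J \<inter> L w = {x}" using J_apex x by blast
    then show ?thesis by simp
  next
    case (Some v)
    then show ?thesis using that J'(3) on_base by simp
  qed
  moreover have "\<not> EH p q" if pq: "p \<in> insert x J" "q \<in> insert x J" for p q
  proof
    assume e: "EH p q"
    consider "p = x" | "q = x" "p \<in> J" | "p \<in> J" "q \<in> J" using pq by blast
    then show False
    proof cases
      case 1
      then show False using e pq(2) no_edge_x EH_irrefl[of x] by blast
    next
      case 2
      then show False using EH_sym[OF e] no_edge_x by blast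
    next
      case 3
      then show False using e J'(2) by blast
    qed
  qed
  moreover have "insert x J \<subseteq> (\<Union>w\<in>join_V V. L w)"
    unfolding join_lists_eq using J_base x by blast
  ultimately show ?thesis unfolding indep_transversals_def by blast
qed

lemma sum_card_residual_le:
  "(\<Sum>x\<in>apex_list. card (indep_transversals V (residual x) EH))
     \<le> card (indep_transversals (join_V V) L EH)"
proof -
  let ?S = "SIGMA x:apex_list. indep_transversals V (residual x) EH"
  have disj: "J \<inter> apex_list = {}" if "J \<in> indep_transversals V (residual x) EH" for x J
    using that residual_subset apex_base_disjoint unfolding indep_transversals_def by blast
  have inj: "inj_on (\<lambda>(x, J). insert x J) ?S"
  proof (rule inj_onI, clarify)
    fix x J y K assume "x \<in> apex_list" "J \<in> indep_transversals V (residual x) EH"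
      "y \<in> apex_list" "K \<in> indep_transversals V (residual y) EH" and eq: "insert x J = insert y K"
    then have "J \<inter> apex_list = {}" "K \<inter> apex_list = {}" "x \<in> apex_list" "y \<in> apex_list"
      using disj by auto
    then have "x = y" "J = insert x J - apex_list" "K = insert y K - apex_list"
      using eq by blast+
    then show "x = y \<and> J = K" using eq by simp
  qed
  have fin: "finite (indep_transversals V (residual x) EH)" for x
    using finite_indep_transversals_base residual_subset by blast
  have "(\<Sum>x\<in>apex_list. card (indep_transversals V (residual x) EH)) = card ?S"
    using finite_list[of None] fin by simp
  also have "\<dots> = card ((\<lambda>(x, J). insert x J) ` ?S)" using card_image[OF inj] by simp
  also have "\<dots> \<le> card (indep_transversals (join_V V) L EH)"
  proof (rule card_mono)
    show "finite (indep_transversals (join_V V) L EH)"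
      using finite_indep_transversals[OF finite_join_V[OF finite_V] finite_list] .
    show "(\<lambda>(x, J). insert x J) ` ?S \<subseteq> indep_transversals (join_V V) L EH"
      using insert_apex_colour by auto
  qed
  finally show ?thesis .
qed

lemma DP_poly_le_residual:
  assumes "x \<in> apex_list"
  shows "DP_poly V E (m - 1) \<le> card (indep_transversals V (residual x) EH)"
proof -
  obtain B where B: "\<And>v. v \<in> V \<Longrightarrow> B v \<subseteq> residual x v" "\<And>v. v \<in> V \<Longrightarrow> card (B v) = m - 1"
    using choose_sublists[of V "m - 1" "residual x"] card_residual_ge[OF assms] by blast
  have "DP_poly V E (m - 1) \<le> card (indep_transversals V B EH)"
    using DP_poly_le_base B residual_subset by blast
  also have "\<dots> \<le> card (indep_transversals V (residual x) EH)"
    by (intro card_mono finite_indep_transversals_base indep_transversals_base_mono)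
      (use B residual_subset in auto)
  finally show ?thesis .
qed

lemma base_cross:
  "u \<in> V \<Longrightarrow> v \<in> V \<Longrightarrow> p \<in> L (Some u) \<Longrightarrow> q \<in> L (Some v) \<Longrightarrow> EH p q \<Longrightarrow> u \<noteq> v \<Longrightarrow> E u v"
  using dp_cover_cross[OF cover, of "Some u" "Some v" p q] by simp

lemma card_joined_earlier_le:
  assumes ord: "degeneracy_order V E r d" and A: "\<And>v. v \<in> V \<Longrightarrow> A v \<subseteq> L (Some v)" and w: "w \<in> V"
  shows "card {w' \<in> V. w' \<noteq> w \<and> r w' \<le> r w \<and> (\<exists>p\<in>A w. \<exists>q\<in>A w'. EH p q)} \<le> d"
proof -
  have "{w' \<in> V. w' \<noteq> w \<and> r w' \<le> r w \<and> (\<exists>p\<in>A w. \<exists>q\<in>A w'. EH p q)}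
          \<subseteq> {w' \<in> V. E w w' \<and> r w' < r w}"
  proof
    fix w' assume w': "w' \<in> {w' \<in> V. w' \<noteq> w \<and> r w' \<le> r w \<and> (\<exists>p\<in>A w. \<exists>q\<in>A w'. EH p q)}"
    then have "r w' \<noteq> r w" using inj_onD[of r V w' w] ord w unfolding degeneracy_order_def by blast
    moreover obtain p q where "p \<in> A w" "q \<in> A w'" "EH p q" using w' by blast
    then have "E w w'" using base_cross[OF w, of w'] A[OF w] A[of w'] w' by blast
    ultimately show "w' \<in> {w' \<in> V. E w w' \<and> r w' < r w}" using w' by auto
  qed
  then have "card {w' \<in> V. w' \<noteq> w \<and> r w' \<le> r w \<and> (\<exists>p\<in>A w. \<exists>q\<in>A w'. EH p q)}
               \<le> card {w' \<in> V. E w w' \<and> r w' < r w}"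
    using finite_V by (intro card_mono) auto
  also have "\<dots> \<le> d" using ord w unfolding degeneracy_order_def by simp
  finally show ?thesis .
qed

text \<open>Colours fixed in advance on the vertices of F are coloured first; every other vertex then loses
  at most one colour to each pinned vertex and to each of its at most d earlier neighbours.\<close>
lemma card_indep_transversals_pinned:
  assumes ord: "degeneracy_order V E r d"
    and A: "\<And>v. v \<in> V \<Longrightarrow> A v \<subseteq> L (Some v)" and F: "F \<subseteq> V"
    and pinned: "\<And>w. w \<in> F \<Longrightarrow> card (A w) = 1"
    and unpinned: "\<And>w. w \<in> V - F \<Longrightarrow> card (A w) = m - 1"
    and pinned_indep: "\<And>w w' p q. w \<in> F \<Longrightarrow> w' \<in> F \<Longrightarrow> p \<in> A w \<Longrightarrow> q \<in> A w' \<Longrightarrow> \<not> EH p q"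
    and room: "card F + d \<le> m - 1"
  shows "(m - 1 - card F - d) ^ card (V - F) \<le> card (indep_transversals V A EH)"
proof -
  define r' where "r' z = (if z \<in> F then 0 else Suc (r z))" for z
  define c where "c z = (if z \<in> F then 1 else m - 1 - card F - d)" for z
  have "(\<Prod>v\<in>V. c v) \<le> card (indep_transversals V A EH)"
  proof (rule card_indep_transversals_base_greedy[OF A])
    fix w assume w: "w \<in> V"
    let ?S = "{w' \<in> V. w' \<noteq> w \<and> r' w' \<le> r' w \<and> (\<exists>p\<in>A w. \<exists>q\<in>A w'. EH p q)}"
    show "c w + card ?S \<le> card (A w)"
    proof (cases "w \<in> F")
      case True
      then have "?S = {}" using pinned_indep unfolding r'_def by (auto split: if_splits)
      then have "card ?S = 0" by (simp only: card.empty)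
      moreover have "c w = 1" using True unfolding c_def by simp
      ultimately show ?thesis using pinned[OF True] by linarith
    next
      case False
      let ?P = "{w' \<in> V. w' \<noteq> w \<and> r w' \<le> r w \<and> (\<exists>p\<in>A w. \<exists>q\<in>A w'. EH p q)}"
      have "?S \<subseteq> F \<union> ?P" using False unfolding r'_def by auto
      then have "card ?S \<le> card (F \<union> ?P)"
        using finite_V F by (intro card_mono) (auto intro: finite_subset)
      also have "\<dots> \<le> card F + card ?P" by (rule card_Un_le)
      also have "\<dots> \<le> card F + d" using card_joined_earlier_le[OF ord A w] by simp
      finally show ?thesis using unpinned[of w] w False room unfolding c_def by simp
    qed
  qed
  moreover have "(\<Prod>v\<in>V. c v) = (m - 1 - card F - d) ^ card (V - F)"
    unfolding c_def by (simp add: prod.If_cases finite_V Diff_eq)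
  ultimately show ?thesis by simp
qed

lemma card_residual_unmatched:
  assumes ord: "degeneracy_order V E r d" and room: "d + 4 \<le> m"
    and x: "x \<in> apex_list" and v0: "v0 \<in> V" and unmatched: "\<And>z. z \<in> L (Some v0) \<Longrightarrow> \<not> EH x z"
  shows "DP_poly V E (m - 1) + (m - d - 2) ^ (card V - 1) \<le> card (indep_transversals V (residual x) EH)"
proof -
  have res_v0: "residual x v0 = L (Some v0)" unfolding residual_def using unmatched by blast
  have "card (L (Some v0)) = m" using card_list[of "Some v0"] v0 by simp
  then have "L (Some v0) \<noteq> {}" using room by auto
  then obtain c where c: "c \<in> L (Some v0)" by blast
  obtain B0 where B0: "\<And>v. v \<in> V \<Longrightarrow> B0 v \<subseteq> residual x v" "\<And>v. v \<in> V \<Longrightarrow> card (B0 v) = m - 1"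
    using choose_sublists[of V "m - 1" "residual x"] card_residual_ge[OF x] by blast
  define B where "B = B0(v0 := L (Some v0) - {c})"
  define A where "A = B(v0 := {c})"
  have B_res: "B v \<subseteq> residual x v" and A_res: "A v \<subseteq> residual x v" if "v \<in> V" for v
    using B0(1)[OF that] c res_v0 unfolding A_def B_def by auto
  have card_B: "card (B v) = m - 1" if "v \<in> V" for v
    using B0(2)[OF that] \<open>card (L (Some v0)) = m\<close> c finite_list[of "Some v0"] unfolding B_def by simp
  let ?T = "indep_transversals V (residual x) EH"
  let ?T1 = "indep_transversals V B EH" and ?T2 = "indep_transversals V A EH"
  have "DP_poly V E (m - 1) \<le> card ?T1"
    using DP_poly_le_base B_res residual_subset card_B by blast
  moreover have "(m - 1 - card {v0} - d) ^ card (V - {v0}) \<le> card ?T2"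
  proof (rule card_indep_transversals_pinned[OF ord])
    fix v assume "v \<in> V"
    then show "A v \<subseteq> L (Some v)" using A_res residual_subset[of x v] by blast
  next
    fix w assume "w \<in> V - {v0}"
    then show "card (A w) = m - 1" using card_B unfolding A_def by simp
  qed (use v0 room EH_irrefl in \<open>auto simp: A_def\<close>)
  moreover have "card ?T1 + card ?T2 \<le> card ?T"
  proof (rule card_add_le_of_disjoint_subsets)
    show "finite ?T" using finite_indep_transversals_base residual_subset by blast
    show "?T1 \<subseteq> ?T" "?T2 \<subseteq> ?T"
      by (intro indep_transversals_base_mono; use B_res A_res residual_subset in blast)+
    have c_notin: "c \<notin> B v" if "v \<in> V" for v
      using B_res[OF that] residual_subset[of x v] base_lists_disjoint[OF that v0] c
      unfolding B_def by (cases "v = v0") auto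
    show "?T1 \<inter> ?T2 = {}"
    proof (intro equals0I)
      fix I assume I: "I \<in> ?T1 \<inter> ?T2"
      then have "c \<in> I" using indep_transversal_singleton_mem[of I V A EH v0 c] v0 by (simp add: A_def)
      moreover have "I \<subseteq> (\<Union>v\<in>V. B v)" using I unfolding indep_transversals_def by blast
      ultimately show False using c_notin by blast
    qed
  qed
  ultimately show ?thesis using v0 finite_V by (simp add: numeral_eq_Suc)
qed

lemma card_indep_transversals_pinned_pair:
  assumes ord: "degeneracy_order V E r d" and room: "d + 4 \<le> m"
    and card_res: "\<And>w. w \<in> V \<Longrightarrow> card (residual x w) = m - 1"
    and uv: "E u v" and ab: "a \<in> residual x u" "b \<in> residual x v" "\<not> EH a b" "\<not> EH b a"
  shows "(m - d - 3) ^ (card V - 2) \<le> card (indep_transversals V ((residual x)(u := {a}, v := {b})) EH)"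
proof -
  have u: "u \<in> V" and v: "v \<in> V" and "u \<noteq> v"
    using simple_graph_edge_in[OF graph uv] simple_graph_irrefl[OF graph] uv by auto
  define A where "A = (residual x)(u := {a}, v := {b})"
  have "(m - 1 - card {u, v} - d) ^ card (V - {u, v}) \<le> card (indep_transversals V A EH)"
  proof (rule card_indep_transversals_pinned[OF ord])
    fix w assume "w \<in> V"
    then show "A w \<subseteq> L (Some w)" using ab residual_subset[of x w] unfolding A_def by auto
  next
    fix w assume "w \<in> V - {u, v}"
    then show "card (A w) = m - 1" using card_res unfolding A_def by simp
  next
    fix w w' p q assume "w \<in> {u, v}" "w' \<in> {u, v}" "p \<in> A w" "q \<in> A w'"
    then consider "p = q" | "p = a" "q = b" | "p = b" "q = a"
      using \<open>u \<noteq> v\<close> unfolding A_def by auto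
    then show "\<not> EH p q" by cases (use EH_irrefl ab(3,4) in blast)+
  qed (use u v \<open>u \<noteq> v\<close> room in \<open>auto simp: A_def\<close>)
  moreover have "card {u, v} = 2" "card (V - {u, v}) = card V - 2"
    using \<open>u \<noteq> v\<close> u v finite_V by (auto simp: card_Diff_subset)
  ultimately show ?thesis unfolding A_def by (simp add: numeral_eq_Suc)
qed

lemma card_residual_split:
  assumes ord: "degeneracy_order V E r d" and room: "d + 4 \<le> m"
    and x: "x \<in> apex_list" and card_res: "\<And>w. w \<in> V \<Longrightarrow> card (residual x w) = m - 1"
    and uv: "E u v" and ab: "a \<in> residual x u" "b \<in> residual x v"
    and free: "\<And>q. q \<in> residual x v \<Longrightarrow> \<not> EH a q" "\<And>q. q \<in> residual x u \<Longrightarrow> \<not> EH b q"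
  shows "DP_poly V E (m - 1) + (m - d - 3) ^ (card V - 2) \<le> card (indep_transversals V (residual x) EH)"
proof -
  have u: "u \<in> V" and v: "v \<in> V" and "u \<noteq> v"
    using simple_graph_edge_in[OF graph uv] simple_graph_irrefl[OF graph] uv by auto
  let ?U = "\<Union>w\<in>V. residual x w"
  let ?EH1 = "add_edge a b (restrict_edges ?U EH)"
  define A where "A = (residual x)(u := {a}, v := {b})"
  let ?T = "indep_transversals V (residual x) EH"
  let ?T1 = "indep_transversals V (residual x) ?EH1" and ?T2 = "indep_transversals V A EH"
  have res_base: "residual x w \<subseteq> L (Some w)" for w using residual_subset .
  have "dp_cover V E (residual x) ?U ?EH1"
    by (rule dp_cover_add_edge[OF dp_cover_base[OF res_base] graph uv ab])
      (use free in \<open>auto simp: restrict_edges_def\<close>)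
  then have "DP_poly V E (m - 1) \<le> card ?T1"
    using DP_poly_le_card_indep_transversals finite_V card_res by blast
  moreover have "(m - d - 3) ^ (card V - 2) \<le> card ?T2"
    unfolding A_def using free(1)[OF ab(2)] free(2)[OF ab(1)]
    by (intro card_indep_transversals_pinned_pair[OF ord room card_res uv ab])
  moreover have "card ?T1 + card ?T2 \<le> card ?T"
  proof (rule card_add_le_of_disjoint_subsets)
    show "finite ?T" using finite_indep_transversals_base res_base by blast
    show "?T1 \<subseteq> ?T"
      by (rule indep_transversals_base_mono) (use res_base in \<open>auto simp: add_edge_def restrict_edges_def\<close>)
    show "?T2 \<subseteq> ?T"
      by (rule indep_transversals_base_mono) (use ab res_base in \<open>auto simp: A_def\<close>)
    show "?T1 \<inter> ?T2 = {}"
    proof (intro equals0I)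
      fix I assume I: "I \<in> ?T1 \<inter> ?T2"
      then have "a \<in> I" "b \<in> I"
        using indep_transversal_singleton_mem[of I V A EH u a]
          indep_transversal_singleton_mem[of I V A EH v b] u v \<open>u \<noteq> v\<close>
        by (auto simp: A_def)
      moreover have "?EH1 a b" using ab u v unfolding add_edge_def by blast
      ultimately show False using I unfolding indep_transversals_def by blast
    qed
  qed
  ultimately show ?thesis by linarith
qed

lemma sum_card_residual_excess:
  assumes "X \<subseteq> apex_list"
  shows "m * DP_poly V E (m - 1) + (\<Sum>x\<in>X. card (indep_transversals V (residual x) EH) - DP_poly V E (m - 1))
           \<le> (\<Sum>x\<in>apex_list. card (indep_transversals V (residual x) EH))"
  using sum_ge_card_mult_plus_excess[OF finite_list[of None] assms] DP_poly_le_residual card_list[of None]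
  by simp

definition apex_matched :: bool where
  "apex_matched \<longleftrightarrow> (\<forall>x\<in>apex_list. \<forall>v\<in>V. \<exists>z\<in>L (Some v). EH x z)"

lemma sum_card_residual_unmatched:
  assumes ord: "degeneracy_order V E r d" and room: "d + 4 \<le> m" and two: "2 \<le> card V"
    and "\<not> apex_matched"
  shows "m * DP_poly V E (m - 1) + 2 * (m - d - 3) ^ (card V - 2)
           \<le> (\<Sum>x\<in>apex_list. card (indep_transversals V (residual x) EH))"
proof -
  obtain x v0 where x: "x \<in> apex_list" "v0 \<in> V" "\<And>z. z \<in> L (Some v0) \<Longrightarrow> \<not> EH x z"
    using assms(4) unfolding apex_matched_def by blast
  let ?t = "m - d - 3"
  have "DP_poly V E (m - 1) + (?t + 1) ^ (card V - 1) \<le> card (indep_transversals V (residual x) EH)"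
    using card_residual_unmatched[OF ord room x] room by (simp add: Suc_diff_Suc numeral_eq_Suc)
  moreover have "2 * ?t ^ (card V - 2) \<le> (?t + 1) ^ (card V - 1)"
    using two_mult_power_le_Suc_power[of ?t "card V - 2"] room two by (simp add: Suc_diff_Suc numeral_eq_Suc)
  moreover have "m * DP_poly V E (m - 1)
      + (card (indep_transversals V (residual x) EH) - DP_poly V E (m - 1))
      \<le> (\<Sum>x\<in>apex_list. card (indep_transversals V (residual x) EH))"
    using sum_card_residual_excess[of "{x}"] x(1) by simp
  ultimately show ?thesis by linarith
qed

definition partner :: "'a \<Rightarrow> 'b \<Rightarrow> 'b" where
  "partner v x = (THE z. z \<in> L (Some v) \<and> EH x z)"

definition matched_colour :: "'a option \<Rightarrow> 'b \<Rightarrow> 'b" where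
  "matched_colour w y = (case w of None \<Rightarrow> y | Some v \<Rightarrow> partner v y)"

definition matched_transversal :: "('a option \<Rightarrow> 'b) \<Rightarrow> 'b set" where
  "matched_transversal g = (\<lambda>w. matched_colour w (g w)) ` join_V V"

context
  assumes matched: apex_matched
begin

lemma partner:
  assumes "x \<in> apex_list" "v \<in> V"
  shows "partner v x \<in> L (Some v) \<and> EH x (partner v x)"
proof -
  obtain z where z: "z \<in> L (Some v)" "EH x z" using matched assms unfolding apex_matched_def by blast
  have "\<exists>!z. z \<in> L (Some v) \<and> EH x z"
    by (rule ex1I[of _ z]) (use z apex_matching[OF assms(2,1)] in blast)+
  then show ?thesis unfolding partner_def by (rule theI')
qed

lemma partner_unique:
  assumes "x \<in> apex_list" "v \<in> V" "z \<in> L (Some v)" "EH x z"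
  shows "z = partner v x"
  using apex_matching[OF assms(2,1,3) _ assms(4)] partner[OF assms(1,2)] by blast

lemma partner_inj:
  assumes "v \<in> V" "x \<in> apex_list" "y \<in> apex_list" "partner v x = partner v y"
  shows "x = y"
proof -
  have "EH (partner v x) x" using EH_sym partner[OF assms(2,1)] by blast
  moreover have "EH (partner v x) y" using EH_sym partner[OF assms(3,1)] assms(4) by metis
  ultimately show ?thesis
    using base_apex_matching[OF assms(1) _ assms(2,3)] partner[OF assms(2,1)] by blast
qed

lemma residual_matched:
  assumes "x \<in> apex_list" "v \<in> V"
  shows "residual x v = L (Some v) - {partner v x}"
  unfolding residual_def using partner[OF assms] partner_unique[OF assms] by blast

lemma card_residual_matched: "x \<in> apex_list \<Longrightarrow> v \<in> V \<Longrightarrow> card (residual x v) = m - 1"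
  using residual_matched partner card_list[of "Some v"] finite_list[of "Some v"] by simp

lemma matched_colour_in_list: "w \<in> join_V V \<Longrightarrow> y \<in> apex_list \<Longrightarrow> matched_colour w y \<in> L w"
  using partner unfolding matched_colour_def by (cases w) auto

lemma matched_colour_inj:
  "w \<in> join_V V \<Longrightarrow> y \<in> apex_list \<Longrightarrow> y' \<in> apex_list \<Longrightarrow> matched_colour w y = matched_colour w y'
    \<Longrightarrow> y = y'"
  using partner_inj unfolding matched_colour_def by (cases w) auto

lemma matched_transversal_inter_list:
  assumes g: "\<And>w. w \<in> join_V V \<Longrightarrow> g w \<in> apex_list" and w: "w \<in> join_V V"
  shows "matched_transversal g \<inter> L w = {matched_colour w (g w)}"
proof
  show "{matched_colour w (g w)} \<subseteq> matched_transversal g \<inter> L w"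
    using matched_colour_in_list[OF w g[OF w]] w unfolding matched_transversal_def by blast
  show "matched_transversal g \<inter> L w \<subseteq> {matched_colour w (g w)}"
  proof
    fix p assume "p \<in> matched_transversal g \<inter> L w"
    then obtain w' where w': "w' \<in> join_V V" "p = matched_colour w' (g w')" "p \<in> L w"
      unfolding matched_transversal_def by blast
    then have "w' = w" using matched_colour_in_list[OF w'(1) g[OF w'(1)]] dp_cover_owner[OF cover _ w] by blast
    then show "p \<in> {matched_colour w (g w)}" using w' by simp
  qed
qed

text \<open>Without a twisted edge, a proper colouring of K_1 \<or> G by apex colours followed by the matching
  gives an H-colouring: matched colours can only be adjacent if they are matched to the same apex colour.\<close>
context
  assumes untwisted: "\<And>u v x y. E u v \<Longrightarrow> x \<in> apex_list \<Longrightarrow> y \<in> apex_list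
      \<Longrightarrow> EH (partner u x) (partner v y) \<Longrightarrow> x = y"
begin

lemma matched_colour_edge:
  assumes w: "w1 \<in> join_V V" "w2 \<in> join_V V" "join_E V E w1 w2"
    and y: "y1 \<in> apex_list" "y2 \<in> apex_list"
    and e: "EH (matched_colour w1 y1) (matched_colour w2 y2)"
  shows "y1 = y2"
proof (cases w1)
  case None
  then obtain v where v: "w2 = Some v" "v \<in> V" using w by (cases w2) auto
  then have "EH y1 (partner v y2)" using e None unfolding matched_colour_def by simp
  then have "partner v y2 = partner v y1" using partner_unique[OF y(1) v(2)] partner[OF y(2) v(2)] by blast
  then show ?thesis using partner_inj[OF v(2) y(2,1)] by simp
next
  case (Some u)
  show ?thesis
  proof (cases w2)
    case None
    then have "EH y2 (partner u y1)" using e Some EH_sym unfolding matched_colour_def by simp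
    then have "partner u y1 = partner u y2"
      using partner_unique[OF y(2)] partner[OF y(1)] w(1) Some by simp
    then show ?thesis using partner_inj y w(1) Some by simp
  next
    case (Some v)
    then show ?thesis
      using untwisted[OF _ y] w e \<open>w1 = Some u\<close> unfolding matched_colour_def by simp
  qed
qed

lemma matched_transversal_mem:
  assumes g: "\<And>w. w \<in> join_V V \<Longrightarrow> g w \<in> apex_list"
    and proper: "\<And>w w'. w \<in> join_V V \<Longrightarrow> w' \<in> join_V V \<Longrightarrow> join_E V E w w' \<Longrightarrow> g w \<noteq> g w'"
  shows "matched_transversal g \<in> indep_transversals (join_V V) L EH"
proof -
  have "\<not> EH p q" if pq_in: "p \<in> matched_transversal g" "q \<in> matched_transversal g" for p q
  proof
    assume e: "EH p q"
    obtain w1 w2 where w: "w1 \<in> join_V V" "w2 \<in> join_V V"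
      and pq: "p = matched_colour w1 (g w1)" "q = matched_colour w2 (g w2)"
      using pq_in unfolding matched_transversal_def by blast
    have "w1 \<noteq> w2" using e pq EH_irrefl by auto
    moreover have "p \<in> L w1" "q \<in> L w2" using pq matched_colour_in_list g w by blast+
    ultimately have edge: "join_E V E w1 w2" using dp_cover_cross[OF cover w] e by blast
    then have "g w1 = g w2" using matched_colour_edge[OF w edge g[OF w(1)] g[OF w(2)]] e pq by blast
    then show False using proper[OF w edge] by blast
  qed
  moreover have "matched_transversal g \<subseteq> (\<Union>w\<in>join_V V. L w)"
    using matched_colour_in_list g unfolding matched_transversal_def by blast
  ultimately show ?thesis
    using matched_transversal_inter_list[OF g] unfolding indep_transversals_def by simp
qed

lemma chrom_poly_le_untwisted:
  shows "chrom_poly (join_V V) (join_E V E) m \<le> card (indep_transversals (join_V V) L EH)"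
proof -
  let ?J = "join_V V" and ?JE = "join_E V E"
  obtain e where e: "bij_betw e {..<m} apex_list"
    using ex_bij_betw_nat_finite[OF finite_list[of None]] card_list[of None]
    by (auto simp: atLeast0LessThan)
  define P where "P = {f \<in> ?J \<rightarrow>\<^sub>E {..<m}. \<forall>u\<in>?J. \<forall>v\<in>?J. ?JE u v \<longrightarrow> f u \<noteq> f v}"
  have f_range: "f w < m" if "f \<in> P" "w \<in> ?J" for f w
    using that unfolding P_def by auto
  have e_apex: "e (f w) \<in> apex_list" if "f \<in> P" "w \<in> ?J" for f w
    using bij_betwE[OF e] f_range[OF that] by blast
  have e_eq: "e i = e j \<longleftrightarrow> i = j" if "i < m" "j < m" for i j
    using bij_betw_imp_inj_on[OF e] that by (auto dest: inj_onD)
  have mem: "matched_transversal (e \<circ> f) \<in> indep_transversals ?J L EH" if f: "f \<in> P" for f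
  proof (rule matched_transversal_mem)
    show "(e \<circ> f) w \<in> apex_list" if "w \<in> ?J" for w using e_apex[OF f that] by simp
    fix w w' assume "w \<in> ?J" "w' \<in> ?J" "?JE w w'"
    then show "(e \<circ> f) w \<noteq> (e \<circ> f) w'"
      using f e_eq[OF f_range[OF f] f_range[OF f]] unfolding P_def by auto
  qed
  have "inj_on (\<lambda>f. matched_transversal (e \<circ> f)) P"
  proof (rule inj_onI)
    fix f f' assume f: "f \<in> P" "f' \<in> P" and eq: "matched_transversal (e \<circ> f) = matched_transversal (e \<circ> f')"
    show "f = f'"
    proof (rule PiE_ext)
      show "f \<in> ?J \<rightarrow>\<^sub>E {..<m}" "f' \<in> ?J \<rightarrow>\<^sub>E {..<m}" using f unfolding P_def by auto
      fix w assume w: "w \<in> ?J"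
      have "{matched_colour w (e (f w))} = {matched_colour w (e (f' w))}"
        using matched_transversal_inter_list[of "e \<circ> f" w] matched_transversal_inter_list[of "e \<circ> f'" w]
          e_apex f w eq by simp
      then have "e (f w) = e (f' w)" using matched_colour_inj[OF w e_apex[OF f(1) w] e_apex[OF f(2) w]] by simp
      then show "f w = f' w" using e_eq[OF f_range[OF f(1) w] f_range[OF f(2) w]] by simp
    qed
  qed
  then have "card P = card ((\<lambda>f. matched_transversal (e \<circ> f)) ` P)" by (simp add: card_image)
  also have "\<dots> \<le> card (indep_transversals ?J L EH)"
    using finite_indep_transversals[OF finite_join_V[OF finite_V] finite_list] mem by (intro card_mono) auto
  finally show ?thesis unfolding chrom_poly_def P_def .
qed

end

lemma twisted_free_pair:
  assumes uv: "E u v" and x: "x \<in> apex_list" and y: "y \<in> apex_list" "x \<noteq> y"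
    and twist: "EH (partner u x) (partner v y)" and room: "3 \<le> m"
  obtains a b where "a \<in> residual x u" "b \<in> residual x v"
    "\<And>q. q \<in> residual x v \<Longrightarrow> \<not> EH a q" "\<And>q. q \<in> residual x u \<Longrightarrow> \<not> EH b q"
proof -
  have u: "u \<in> V" and v: "v \<in> V" using simple_graph_edge_in[OF graph uv] by auto
  define b where "b = partner v y"
  have "partner v y \<noteq> partner v x" using partner_inj[OF v x y(1)] y(2) by metis
  then have b: "b \<in> residual x v"
    using partner[OF y(1) v] unfolding b_def residual_matched[OF x v] by blast
  have b_free: "\<not> EH b q" if "q \<in> residual x u" for q
  proof
    assume "EH b q"
    moreover have "EH b (partner u x)" using EH_sym[OF twist] unfolding b_def .
    moreover have "b \<in> L (Some v)" "q \<in> L (Some u)"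
      using b that residual_subset by blast+
    ultimately have "q = partner u x"
      using base_matching[OF simple_graph_sym[OF graph uv]] partner[OF x u] by blast
    then show False using that residual_matched[OF x u] by blast
  qed
  have "\<exists>a\<in>residual x u. \<forall>q\<in>residual x v. \<not> EH a q"
  proof (rule ccontr)
    assume no_free: "\<not> ?thesis"
    have "card (residual x u) \<le> card (residual x v - {b})"
    proof (rule card_le_of_unique_neighbours[where R = EH])
      show "finite (residual x v - {b})"
        using finite_list[of "Some v"] v residual_subset[of x v] by (auto intro: finite_subset)
    next
      fix a assume a: "a \<in> residual x u"
      then obtain q where q: "q \<in> residual x v" "EH a q" using no_free by blast
      then have "q \<noteq> b" using b_free[OF a] EH_sym[OF q(2)] by blast
      then show "\<exists>q\<in>residual x v - {b}. EH a q" using q by blast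
    next
      fix a a' q assume "a \<in> residual x u" "a' \<in> residual x u" "q \<in> residual x v - {b}"
        and e: "EH a q" "EH a' q"
      then show "a = a'"
        using base_matching[OF simple_graph_sym[OF graph uv] _ _ _ EH_sym[OF e(1)] EH_sym[OF e(2)]]
          residual_subset by blast
    qed
    then show False using card_residual_matched[OF x u] card_residual_matched[OF x v] b room by simp
  qed
  then show ?thesis using that b b_free by blast
qed

lemma sum_card_residual_twisted:
  assumes ord: "degeneracy_order V E r d" and room: "d + 4 \<le> m"
    and tw: "E u v" "x \<in> apex_list" "y \<in> apex_list" "x \<noteq> y" "EH (partner u x) (partner v y)"
  shows "m * DP_poly V E (m - 1) + 2 * (m - d - 3) ^ (card V - 2)
           \<le> (\<Sum>x\<in>apex_list. card (indep_transversals V (residual x) EH))"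
proof -
  have excess: "DP_poly V E (m - 1) + (m - d - 3) ^ (card V - 2) \<le> card (indep_transversals V (residual x) EH)"
    if twisted: "E u v" "x \<in> apex_list" "y \<in> apex_list" "x \<noteq> y" "EH (partner u x) (partner v y)"
    for u v x y
  proof -
    obtain a b where "a \<in> residual x u" "b \<in> residual x v"
      "\<And>q. q \<in> residual x v \<Longrightarrow> \<not> EH a q" "\<And>q. q \<in> residual x u \<Longrightarrow> \<not> EH b q"
      using twisted_free_pair[OF twisted] room by auto
    then show ?thesis
      using card_residual_split[OF ord room \<open>x \<in> apex_list\<close> card_residual_matched[OF \<open>x \<in> apex_list\<close>]
          \<open>E u v\<close>] by blast
  qed
  have "E v u" "EH (partner v y) (partner u x)" using simple_graph_sym[OF graph tw(1)] EH_sym[OF tw(5)] by simp_all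
  then have "DP_poly V E (m - 1) + (m - d - 3) ^ (card V - 2) \<le> card (indep_transversals V (residual y) EH)"
    using excess[of v u y x] tw(2-4) by simp
  moreover note excess[OF tw]
  moreover have "m * DP_poly V E (m - 1)
      + ((card (indep_transversals V (residual x) EH) - DP_poly V E (m - 1))
        + (card (indep_transversals V (residual y) EH) - DP_poly V E (m - 1)))
      \<le> (\<Sum>x\<in>apex_list. card (indep_transversals V (residual x) EH))"
    using sum_card_residual_excess[of "{x, y}"] tw(2-4) by simp
  ultimately show ?thesis by linarith
qed

end

lemma card_colorings_lower_bound:
  assumes ord: "degeneracy_order V E r d" and room: "d + 4 \<le> m" and two: "2 \<le> card V"
  shows "min (chrom_poly (join_V V) (join_E V E) m)
             (m * DP_poly V E (m - 1) + 2 * (m - d - 3) ^ (card V - 2))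
           \<le> card (indep_transversals (join_V V) L EH)"
proof -
  consider (unmatched) "\<not> apex_matched"
    | (twisted) u v x y where "apex_matched" "E u v" "x \<in> apex_list" "y \<in> apex_list" "x \<noteq> y"
        "EH (partner u x) (partner v y)"
    | (untwisted) "apex_matched" "\<And>u v x y. E u v \<Longrightarrow> x \<in> apex_list \<Longrightarrow> y \<in> apex_list
        \<Longrightarrow> EH (partner u x) (partner v y) \<Longrightarrow> x = y"
    by blast
  then show ?thesis
  proof cases
    case unmatched
    then show ?thesis
      using sum_card_residual_unmatched[OF ord room two] sum_card_residual_le by (simp add: min.coboundedI2)
  next
    case twisted
    then show ?thesis
      using sum_card_residual_twisted[OF twisted(1) ord room twisted(2-6)] sum_card_residual_le
      by (simp add: min.coboundedI2)
  next
    case untwisted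
    then show ?thesis using chrom_poly_le_untwisted by (simp add: min.coboundedI1)
  qed
qed

end

theorem mainTheorem6:
  fixes V :: "'a set" and E :: "'a \<Rightarrow> 'a \<Rightarrow> bool" and m :: nat
  assumes "simple_graph V E"
    and "connected_graph V E"
    and "col V E \<ge> 3"
    and "m \<ge> col V E + 3"
  shows "DP_poly (join_V V) (join_E V E) m \<ge>
           min (chrom_poly (join_V V) (join_E V E) m)
               (m * DP_poly V E (m - 1) + 2 * (m - col V E - 2) ^ (card V - 2))"
proof -
  have fin: "finite V" using simple_graph_finite[OF assms(1)] .
  obtain r where ord: "degeneracy_order V E r (col V E - 1)" using degeneracy_order_col[OF fin] by blast
  have two: "2 \<le> card V" using col_le_card[OF fin, of E] assms(3) by simp
  have t: "m - col V E - 2 = m - (col V E - 1) - 3" using assms(3) by simp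
  let ?bound = "min (chrom_poly (join_V V) (join_E V E) m)
                    (m * DP_poly V E (m - 1) + 2 * (m - col V E - 2) ^ (card V - 2))"
  have "?bound \<le> num_cover_colorings (join_V V) VH EH"
    if "is_m_fold_cover (join_V V) (join_E V E) m L VH EH" for L VH EH
  proof -
    interpret join_cover V E m L VH EH
      using assms(1) that unfolding is_m_fold_cover_def is_cover_iff_dp_cover by unfold_locales auto
    show ?thesis
      using card_colorings_lower_bound[OF ord _ two] assms(3,4)
        num_cover_colorings_eq_card_indep_transversals[OF cover finite_join_V[OF finite_V]]
      unfolding t by simp
  qed
  moreover note is_m_fold_cover_trivial[OF simple_graph_join[OF assms(1)], of m]
  ultimately show ?thesis unfolding DP_poly_def by (intro cInf_greatest) blast+
qed

end
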